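(* Let $\mathfrak{S}=(\mathcal{X},\mathsf{S},\gamma,(\Lambda_{a})_{a\in\mathcal{A}})$ be a spectral decomposition system for the Euclidean space $\mathfrak{H}$. Let $D$ be a nonempty $\mathsf{S}$-invariant subset of $\mathcal{X}$, let $\psi\in\Gamma_0(\mathcal{X})$ be an $\mathsf{S}$-invariant Legendre function such that $D\cap\operatorname{dom}\psi\neq\varnothing$, and let $X\in\mathfrak{H}$. Then: (i) $\operatorname{dist}_{\gamma^{-1}(D)}^{\psi\circ\gamma}(X)=\operatorname{dist}_D^{\psi}(\gamma(X))$; (ii) for every $Z\in\mathfrak{H}$: $Z\in\operatorname{Proj}_{\gamma^{-1}(D)}^{\psi\circ\gamma}X$ if and only if $\gamma(Z)\in\operatorname{Proj}_{D}^{\psi}\gamma(X)$ and there exists $a\in\mathcal{A}$ with $X=\Lambda_a\gamma(X)$ and $Z=\Lambda_a\gamma(Z)$; (iii) $\operatorname{Proj}_{\gamma^{-1}(D)}^{\psi\circ\gamma}X=\{\Lambda_az: z\in\operatorname{Proj}_D^{\psi}\gamma(X),\ a\in\mathcal{A}_X\}$; (iv) $\operatorname{Proj}_{\gamma^{-1}(D)}^{\psi\circ\gamma}X$ is a singleton if and only if $\operatorname{Proj}_D^{\psi}\gamma(X)$ is a singleton.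
   Context: A Euclidean space is a finite-dimensional real inner product space; inner products are written $\langle\cdot,\cdot\rangle$ and norms $\|\cdot\|$. Let $\mathfrak{H}$ and $\mathcal{X}$ be Euclidean spaces, let $\mathsf{S}$ be a group acting on $\mathcal{X}$ by linear isometries, let $\gamma\colon\mathfrak{H}\to\mathcal{X}$, and let $(\Lambda_a)_{a\in\mathcal{A}}$ be a family of linear operators from $\mathcal{X}$ to $\mathfrak{H}$. The orbit of $x$ is $\mathsf{S}\cdot x=\{s\cdot x: s\in\mathsf{S}\}$; a map $f$ on $\mathcal{X}$ is $\mathsf{S}$-invariant if $f(s\cdot x)=f(x)$ for all $s,x$; a set $D$ is $\mathsf{S}$-invariant if $s\cdot x\in D$ for all $x\in D$, $s\in\mathsf{S}$. The tuple is a spectral decomposition system for $\mathfrak{H}$ if: [A] every $\Lambda_a$ is an isometry; [B] there exists an $\mathsf{S}$-invariant $\tau\colon\mathcal{X}\to\mathcal{X}$ with $\tau(x)\in\mathsf{S}\cdot x$ for all $x$ and $\gamma\circ\Lambda_a=\tau$ for all $a$; [C] for every $X\in\mathfrak{H}$ there is $a$ with $X=\Lambda_a\gamma(X)$; [D] $\langle X,Y\rangle\leq\langle\gamma(X),\gamma(Y)\rangle$ for all $X,Y\in\mathfrak{H}$. For $X\in\mathfrak{H}$, $\mathcal{A}_X=\{a\in\mathcal{A}: X=\Lambda_a\gamma(X)\}$. $\operatorname{dom}f=\{f<+\infty\}$; $\Gamma_0(\mathcal{H})$ is the set of proper lower semicontinuous convex functions $\mathcal{H}\to\left]-\infty,+\infty\right]$;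 $\partial g(x)=\{u:\langle z-x,u\rangle+g(x)\leq g(z)\ \forall z\}$. A function $g\in\Gamma_0(\mathcal{H})$ is Legendre if $\partial g(x)$ has at most one element for every $x$ and $g$ is strictly convex on every convex subset of $\{x:\partial g(x)\neq\varnothing\}$. ($\psi\circ\gamma$ is a Legendre function on $\mathfrak{H}$ under the stated hypotheses.) For Legendre $g$: $D_g(y,x)=g(y)-g(x)-\langle y-x,\nabla g(x)\rangle$ if $x\in\operatorname{int}\operatorname{dom}g$ and $+\infty$ otherwise; for $f$ with $\operatorname{dom}f\cap\operatorname{dom}g\neq\varnothing$, $\operatorname{env}_f^g(x)=\inf_y(f(y)+D_g(y,x))$ and $\operatorname{Prox}_f^gx=\operatorname{Argmin}(f+D_g(\cdot,x))$ (set of minimizers if the infimum is $<+\infty$, else $\varnothing$). For a set $C$ with $C\cap\operatorname{dom}g\neq\varnothing$, with $\iota_C$ the indicator function ($0$ on $C$, $+\infty$ off $C$): $\operatorname{dist}_C^g=\operatorname{env}_{\iota_C}^g$ and $\operatorname{Proj}_C^g=\operatorname{Prox}_{\iota_C}^g$. *)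

theory Defs
  imports "HOL-Analysis.Analysis"
begin

text \<open>A group acting on X by linear isometries is represented by the group of
maps x |-> s.x it induces (only the action matters for orbits/invariance).\<close>

definition lin_isometry :: "('u::real_normed_vector \<Rightarrow> 'v::real_normed_vector) \<Rightarrow> bool" where
  "lin_isometry L \<longleftrightarrow> linear L \<and> (\<forall>x. norm (L x) = norm x)"

definition isometry_group :: "('x::euclidean_space \<Rightarrow> 'x) set \<Rightarrow> bool" where
  "isometry_group S \<longleftrightarrow>
     (\<forall>s\<in>S. lin_isometry s) \<and> id \<in> S \<and> (\<forall>s\<in>S. \<forall>t\<in>S. s \<circ> t \<in> S) \<and>
     (\<forall>s\<in>S. \<exists>t\<in>S. s \<circ> t = id \<and> t \<circ> s = id)"

definition orbit :: "('x \<Rightarrow> 'x) set \<Rightarrow> 'x \<Rightarrow> 'x set" where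
  "orbit S x = {s x | s. s \<in> S}"

definition invariant_fun :: "('x \<Rightarrow> 'x) set \<Rightarrow> ('x \<Rightarrow> 'b) \<Rightarrow> bool" where
  "invariant_fun S f \<longleftrightarrow> (\<forall>s\<in>S. \<forall>x. f (s x) = f x)"

definition invariant_set :: "('x \<Rightarrow> 'x) set \<Rightarrow> 'x set \<Rightarrow> bool" where
  "invariant_set S D \<longleftrightarrow> (\<forall>s\<in>S. \<forall>x\<in>D. s x \<in> D)"

definition spectral_decomposition_system ::
  "('x::euclidean_space \<Rightarrow> 'x) set \<Rightarrow> ('h::euclidean_space \<Rightarrow> 'x) \<Rightarrow> 'a set \<Rightarrow> ('a \<Rightarrow> 'x \<Rightarrow> 'h) \<Rightarrow> bool" where
  "spectral_decomposition_system S \<gamma> A \<Lambda> \<longleftrightarrow>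
     isometry_group S \<and>
     (\<forall>a\<in>A. lin_isometry (\<Lambda> a)) \<and>
     (\<exists>\<tau>. invariant_fun S \<tau> \<and> (\<forall>x. \<tau> x \<in> orbit S x) \<and> (\<forall>a\<in>A. \<gamma> \<circ> \<Lambda> a = \<tau>)) \<and>
     (\<forall>X. \<exists>a\<in>A. X = \<Lambda> a (\<gamma> X)) \<and>
     (\<forall>X Y. inner X Y \<le> inner (\<gamma> X) (\<gamma> Y))"

definition adapted_indices :: "('h \<Rightarrow> 'x) \<Rightarrow> 'a set \<Rightarrow> ('a \<Rightarrow> 'x \<Rightarrow> 'h) \<Rightarrow> 'h \<Rightarrow> 'a set" where
  "adapted_indices \<gamma> A \<Lambda> X = {a\<in>A. X = \<Lambda> a (\<gamma> X)}"

definition edom :: "('u \<Rightarrow> ereal) \<Rightarrow> 'u set" where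
  "edom f = {x. f x < \<infinity>}"

definition epigraph :: "('u \<Rightarrow> ereal) \<Rightarrow> ('u \<times> real) set" where
  "epigraph f = {(x, r). f x \<le> ereal r}"

definition Gamma0 :: "('u::euclidean_space \<Rightarrow> ereal) \<Rightarrow> bool" where
  "Gamma0 f \<longleftrightarrow> (\<forall>x. f x \<noteq> -\<infinity>) \<and> (\<exists>x. f x < \<infinity>) \<and>
     closed (epigraph f) \<and> convex (epigraph f)"

definition subdiff :: "('u::real_inner \<Rightarrow> ereal) \<Rightarrow> 'u \<Rightarrow> 'u set" where
  "subdiff g x = {u. \<forall>z. ereal (inner (z - x) u) + g x \<le> g z}"

definition strictly_convex_on_e :: "'u::real_vector set \<Rightarrow> ('u \<Rightarrow> ereal) \<Rightarrow> bool" where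
  "strictly_convex_on_e C g \<longleftrightarrow>
     (\<forall>x\<in>C. \<forall>y\<in>C. \<forall>t::real. x \<noteq> y \<and> 0 < t \<and> t < 1 \<longrightarrow>
        g ((1 - t) *\<^sub>R x + t *\<^sub>R y) < ereal (1 - t) * g x + ereal t * g y)"

definition legendre :: "('u::euclidean_space \<Rightarrow> ereal) \<Rightarrow> bool" where
  "legendre g \<longleftrightarrow> Gamma0 g \<and>
     (\<forall>x. \<forall>u\<in>subdiff g x. \<forall>v\<in>subdiff g x. u = v) \<and>
     (\<forall>C. convex C \<and> C \<subseteq> {x. subdiff g x \<noteq> {}} \<longrightarrow> strictly_convex_on_e C g)"

definition egrad :: "('u::euclidean_space \<Rightarrow> ereal) \<Rightarrow> 'u \<Rightarrow> 'u" where
  "egrad g x = (SOME u. ((\<lambda>y. real_of_ereal (g y)) has_derivative (\<lambda>h. inner u h)) (at x))"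

definition bregman :: "('u::euclidean_space \<Rightarrow> ereal) \<Rightarrow> 'u \<Rightarrow> 'u \<Rightarrow> ereal" where
  "bregman g y x =
     (if x \<in> interior (edom g) then g y - g x - ereal (inner (y - x) (egrad g x)) else \<infinity>)"

definition benv :: "('u::euclidean_space \<Rightarrow> ereal) \<Rightarrow> ('u \<Rightarrow> ereal) \<Rightarrow> 'u \<Rightarrow> ereal" where
  "benv f g x = (INF y. f y + bregman g y x)"

definition bprox :: "('u::euclidean_space \<Rightarrow> ereal) \<Rightarrow> ('u \<Rightarrow> ereal) \<Rightarrow> 'u \<Rightarrow> 'u set" where
  "bprox f g x = (if benv f g x < \<infinity> then {y. f y + bregman g y x = benv f g x} else {})"

definition eindicator :: "'u set \<Rightarrow> 'u \<Rightarrow> ereal" where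
  "eindicator C y = (if y \<in> C then 0 else \<infinity>)"

definition bdist :: "'u::euclidean_space set \<Rightarrow> ('u \<Rightarrow> ereal) \<Rightarrow> 'u \<Rightarrow> ereal" where
  "bdist C g = benv (eindicator C) g"

definition bproj :: "'u::euclidean_space set \<Rightarrow> ('u \<Rightarrow> ereal) \<Rightarrow> 'u \<Rightarrow> 'u set" where
  "bproj C g = bprox (eindicator C) g"

end

(* Write x = \<gamma> X, g = \<nabla>\<psi>(x) and G = \<nabla>(\<psi> \<circ> \<gamma>)(X). For every a \<in> A_X, G = \<Lambda>_a g, so
   the inequality <Y, G> \<le> <\<gamma> Y, \<gamma> G> gives D_{\<psi>\<circ>\<gamma>}(Y, X) \<ge> D_\<psi>(\<gamma> Y, x), with equality at
   the points Y = \<Lambda>_a y. This yields (i), and shows that \<gamma> maps projections to projections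
   and \<Lambda>_a maps projections back. Equality in <Z, G> \<le> <\<gamma> Z, g> means that Z and G admit a
   common decomposition \<Lambda>_c; then X and \<Lambda>_c x have the same gradient, and strict convexity
   of \<psi> together with strict convexity of the norm forces X = \<Lambda>_c x, which gives (ii)
   and (iii). For (iv), a unique projection z is the unique maximizer of <., g> on its
   orbit, and a compactness argument on the orbit shows that \<Lambda>_a z does not depend on
   a \<in> A_X. *)

theory Submission
  imports Defs
begin

section \<open>Subgradients and differentiability\<close>

lemma subdiff_ineq:
  assumes "V \<in> subdiff F Y" "F Y = ereal a" "F W = ereal b"
  shows "a + inner (W - Y) V \<le> b"
proof -
  have "ereal (inner (W - Y) V) + F Y \<le> F W" using assms(1) unfolding subdiff_def by blast
  then show ?thesis using assms(2,3) by simp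
qed

lemma subdiff_not_MInf:
  assumes "V \<in> subdiff F Y" "F Y = ereal a"
  shows "F W \<noteq> -\<infinity>"
proof -
  have "ereal (inner (W - Y) V) + F Y \<le> F W" using assms(1) unfolding subdiff_def by blast
  then show ?thesis using assms(2) by auto
qed

lemma subdiff_convex_combination:
  assumes "V1 \<in> subdiff F X" "V2 \<in> subdiff F X" "F X = ereal c" "0 \<le> t" "t \<le> 1"
  shows "(1 - t) *\<^sub>R V1 + t *\<^sub>R V2 \<in> subdiff F X"
  unfolding subdiff_def
proof clarify
  fix W
  show "ereal (inner (W - X) ((1 - t) *\<^sub>R V1 + t *\<^sub>R V2)) + F X \<le> F W"
  proof (cases "F W")
    case (real b)
    have "(1 - t) * (c + inner (W - X) V1) \<le> (1 - t) * b"
      using subdiff_ineq[OF assms(1,3) real] assms(5) by (intro mult_left_mono) auto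
    moreover have "t * (c + inner (W - X) V2) \<le> t * b"
      using subdiff_ineq[OF assms(2,3) real] assms(4) by (intro mult_left_mono) auto
    ultimately show ?thesis
      using real assms(3) by (simp add: algebra_simps)
  next
    case MInf
    then show ?thesis using subdiff_not_MInf[OF assms(1,3)] by simp
  qed simp
qed

lemma subdiff_convex_ineq:
  assumes "V \<in> subdiff F ((1 - t) *\<^sub>R X + t *\<^sub>R X')"
    and "F ((1 - t) *\<^sub>R X + t *\<^sub>R X') = ereal m" "F X = ereal a" "F X' = ereal b"
    and "0 \<le> t" "t \<le> 1"
  shows "m \<le> (1 - t) * a + t * b"
proof -
  let ?M = "(1 - t) *\<^sub>R X + t *\<^sub>R X'"
  have "(1 - t) * (m + inner (X - ?M) V) \<le> (1 - t) * a"
    using subdiff_ineq[OF assms(1,2,3)] assms(6) by (intro mult_left_mono) auto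
  moreover have "t * (m + inner (X' - ?M) V) \<le> t * b"
    using subdiff_ineq[OF assms(1,2,4)] assms(5) by (intro mult_left_mono) auto
  moreover have "X - ?M = t *\<^sub>R (X - X')" "X' - ?M = (1 - t) *\<^sub>R (X' - X)"
    by (simp_all add: algebra_simps)
  ultimately show ?thesis by (simp add: algebra_simps)
qed

lemma subdiff_limit:
  assumes sub: "\<And>n. Vs n \<in> subdiff F (Ys n)" and fin: "\<And>n. F (Ys n) = ereal (fs n)"
    and "Ys \<longlonglongrightarrow> X" "Vs \<longlonglongrightarrow> L" "fs \<longlonglongrightarrow> c" and "F X = ereal c"
  shows "L \<in> subdiff F X"
  unfolding subdiff_def
proof clarify
  fix W
  show "ereal (inner (W - X) L) + F X \<le> F W"
  proof (cases "F W")
    case (real b)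
    have "(\<lambda>n. fs n + inner (W - Ys n) (Vs n)) \<longlonglongrightarrow> c + inner (W - X) L"
      by (intro tendsto_intros assms)
    then have "c + inner (W - X) L \<le> b"
      by (rule LIMSEQ_le_const2) (use subdiff_ineq[OF sub fin real] in auto)
    then show ?thesis using real \<open>F X = ereal c\<close> by (simp add: add.commute)
  next
    case MInf
    then show ?thesis using subdiff_not_MInf[OF sub fin] by simp
  qed simp
qed

lemma subdiff_locally_bounded:
  assumes "open B" "X \<in> B"
    and sub: "\<And>Y. Y \<in> B \<Longrightarrow> V Y \<in> subdiff F Y"
    and fin: "\<And>Y. Y \<in> B \<Longrightarrow> F Y = ereal (f Y)"
    and cont: "continuous (at X) f"
  shows "\<exists>\<delta>>0. \<exists>M. \<forall>Y. dist Y X < \<delta> \<longrightarrow> norm (V Y) \<le> M"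
proof -
  obtain d where d: "d > 0" "\<And>Y. dist Y X < d \<Longrightarrow> \<bar>f Y - f X\<bar> < 1"
    using cont unfolding continuous_at_eps_delta by (metis dist_real_def zero_less_one)
  obtain r where r: "r > 0" "ball X r \<subseteq> B"
    using assms(1,2) open_contains_ball by blast
  define \<delta> where "\<delta> = min d r"
  have \<delta>: "\<delta> > 0" "ball X \<delta> \<subseteq> B" "\<And>Y. dist Y X < \<delta> \<Longrightarrow> \<bar>f Y - f X\<bar> < 1"
    using d r by (auto simp: \<delta>_def dist_commute)
  have "norm (V Y) \<le> 8 / \<delta>" if Y: "dist Y X < \<delta> / 2" for Y
  proof (cases "V Y = 0")
    case False
    define W where "W = Y + (\<delta> / 4 / norm (V Y)) *\<^sub>R V Y"
    have "dist W X \<le> dist W Y + dist Y X" by (rule dist_triangle)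
    also have "dist W Y = \<delta> / 4" using False \<delta>(1) by (simp add: W_def dist_norm)
    finally have W: "dist W X < \<delta>" using Y \<delta>(1) by linarith
    have inB: "Y \<in> B" "W \<in> B" using Y W \<delta> by (auto simp: dist_commute subset_iff)
    have "f Y + inner (W - Y) (V Y) \<le> f W"
      using subdiff_ineq[OF sub fin fin] inB by blast
    moreover have "inner (W - Y) (V Y) = \<delta> / 4 * norm (V Y)"
      by (simp add: W_def power2_norm_eq_inner[symmetric] power2_eq_square)
    moreover have "\<bar>f Y - f X\<bar> < 1" using \<delta>(1,3) Y by simp
    ultimately have "\<delta> / 4 * norm (V Y) < 2"
      using \<delta>(3)[OF W] by linarith
    then show ?thesis using \<delta>(1) by (simp add: field_simps)
  qed (use \<delta> in simp)
  then show ?thesis using \<delta>(1) by (metis half_gt_zero)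
qed

lemma discontinuity_sequence:
  assumes "\<not> continuous (at X) V" "\<rho> > 0"
  obtains e Ys where "e > 0" "Ys \<longlonglongrightarrow> X" "\<And>n. dist (Ys n) X < \<rho>"
    "\<And>n. \<not> dist (V (Ys n)) (V X) < e"
proof -
  obtain e where e: "e > 0" and far: "\<forall>d>0. \<exists>Y. dist Y X < d \<and> \<not> dist (V Y) (V X) < e"
    using assms(1) unfolding continuous_at_eps_delta by blast
  have "\<forall>n. \<exists>Y. dist Y X < min \<rho> (inverse (real (Suc n))) \<and> \<not> dist (V Y) (V X) < e"
  proof
    fix n
    have "0 < min \<rho> (inverse (real (Suc n)))" using assms(2) by simp
    then show "\<exists>Y. dist Y X < min \<rho> (inverse (real (Suc n))) \<and> \<not> dist (V Y) (V X) < e"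
      using far by blast
  qed
  then obtain Ys where Ys: "\<And>n. dist (Ys n) X < min \<rho> (inverse (real (Suc n)))"
    and Ys_far: "\<And>n. \<not> dist (V (Ys n)) (V X) < e"
    by metis
  have "\<forall>n. norm (dist (Ys n) X) \<le> inverse (real (Suc n))"
    using Ys by (simp add: order.strict_implies_order)
  then have "(\<lambda>n. dist (Ys n) X) \<longlonglongrightarrow> 0"
    by (intro Lim_null_comparison[OF always_eventually LIMSEQ_inverse_real_of_nat])
  then have "Ys \<longlonglongrightarrow> X" using tendsto_dist_iff by blast
  then show thesis using that e Ys Ys_far by simp
qed

lemma subdiff_selection_continuous_at:
  fixes F :: "'u::euclidean_space \<Rightarrow> ereal"
  assumes "open B" "X \<in> B"
    and sub: "\<And>Y. Y \<in> B \<Longrightarrow> V Y \<in> subdiff F Y"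
    and fin: "\<And>Y. Y \<in> B \<Longrightarrow> F Y = ereal (f Y)"
    and cont: "continuous (at X) f"
    and unique: "\<And>W. W \<in> subdiff F X \<Longrightarrow> W = V X"
  shows "continuous (at X) V"
proof (rule ccontr)
  obtain \<delta> M where \<delta>: "\<delta> > 0" "\<And>Y. dist Y X < \<delta> \<Longrightarrow> norm (V Y) \<le> M"
    using subdiff_locally_bounded[OF assms(1-2) sub fin cont] by blast
  obtain r where r: "r > 0" "ball X r \<subseteq> B"
    using assms(1,2) open_contains_ball by blast
  assume "\<not> continuous (at X) V"
  then obtain e Ys where e: "e > 0" and Ys: "Ys \<longlonglongrightarrow> X" "\<And>n. dist (Ys n) X < min \<delta> r"
    and Ys_far: "\<And>n. \<not> dist (V (Ys n)) (V X) < e"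
    using discontinuity_sequence[of X V "min \<delta> r"] \<delta>(1) r(1) by auto
  have Ys_B: "Ys n \<in> B" for n using Ys(2)[of n] r(2) by (auto simp: dist_commute)
  have "\<forall>n. norm (V (Ys n)) \<le> M" using \<delta>(2) Ys(2) by simp
  then have "bounded (range (\<lambda>n. V (Ys n)))" by (auto simp: bounded_iff)
  then obtain L \<sigma> where \<sigma>: "strict_mono \<sigma>" and L: "(\<lambda>n. V (Ys (\<sigma> n))) \<longlonglongrightarrow> L"
    using bounded_imp_convergent_subsequence unfolding comp_def by blast
  have Ys\<sigma>: "(\<lambda>n. Ys (\<sigma> n)) \<longlonglongrightarrow> X"
    using LIMSEQ_subseq_LIMSEQ[OF Ys(1) \<sigma>] by (simp add: comp_def)
  have "(\<lambda>n. f (Ys (\<sigma> n))) \<longlonglongrightarrow> f X"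
    using cont Ys\<sigma> by (rule isCont_tendsto_compose)
  then have "L \<in> subdiff F X"
    using subdiff_limit[OF sub fin Ys\<sigma> L _ fin] Ys_B assms(2) by blast
  then have "(\<lambda>n. V (Ys (\<sigma> n))) \<longlonglongrightarrow> V X" using L unique by simp
  then have "\<forall>\<^sub>F n in sequentially. dist (V (Ys (\<sigma> n))) (V X) < e"
    using e by (rule tendstoD)
  then obtain N where "dist (V (Ys (\<sigma> N))) (V X) < e"
    by (auto simp: eventually_sequentially)
  then show False using Ys_far[of "\<sigma> N"] by simp
qed

lemma has_derivative_if_continuous_subgradient:
  assumes "open B" "X \<in> B"
    and sub: "\<And>Y. Y \<in> B \<Longrightarrow> V Y \<in> subdiff F Y"
    and fin: "\<And>Y. Y \<in> B \<Longrightarrow> F Y = ereal (f Y)"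
    and cont: "continuous (at X) V"
  shows "(f has_derivative inner (V X)) (at X)"
  unfolding has_derivative_at_alt
proof (intro conjI allI impI bounded_linear_inner_right)
  fix e :: real assume "e > 0"
  obtain d where d: "d > 0" "\<And>Y. dist Y X < d \<Longrightarrow> dist (V Y) (V X) < e"
    using cont \<open>e > 0\<close> unfolding continuous_at_eps_delta by blast
  obtain r where r: "r > 0" "ball X r \<subseteq> B"
    using assms(1,2) open_contains_ball by blast
  \<comment> \<open>the subgradient inequalities at X and at Y squeeze the remainder
      between 0 and inner (Y - X) (V Y - V X)\<close>
  have "\<bar>f Y - f X - inner (V X) (Y - X)\<bar> \<le> e * norm (Y - X)"
    if Y: "norm (Y - X) < min d r" for Y
  proof -
    have inB: "Y \<in> B" using Y r(2) by (auto simp: dist_norm norm_minus_commute)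
    have lower: "f X + inner (Y - X) (V X) \<le> f Y"
      using subdiff_ineq[OF sub fin fin] inB assms(2) by blast
    have "f Y + inner (X - Y) (V Y) \<le> f X"
      using subdiff_ineq[OF sub fin fin] inB assms(2) by blast
    then have upper: "f Y - f X - inner (V X) (Y - X) \<le> inner (Y - X) (V Y - V X)"
      by (simp add: inner_diff_left inner_diff_right inner_commute)
    have "inner (Y - X) (V Y - V X) \<le> norm (Y - X) * norm (V Y - V X)"
      by (rule norm_cauchy_schwarz)
    also have "\<dots> \<le> norm (Y - X) * e"
      using d(2)[of Y] Y by (intro mult_left_mono) (auto simp: dist_norm)
    finally show ?thesis using lower upper by (simp add: inner_commute abs_le_iff mult.commute)
  qed
  then show "\<exists>d>0. \<forall>Y. norm (Y - X) < d \<longrightarrow> norm (f Y - f X - inner (V X) (Y - X)) \<le> e * norm (Y - X)"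
    using d(1) r(1) by (metis min_less_iff_conj real_norm_def)
qed

lemma has_derivative_if_unique_subgradient:
  fixes F :: "'u::euclidean_space \<Rightarrow> ereal"
  assumes "open B" "X \<in> B"
    and "\<And>Y. Y \<in> B \<Longrightarrow> V Y \<in> subdiff F Y"
    and "\<And>Y. Y \<in> B \<Longrightarrow> F Y = ereal (f Y)"
    and "continuous (at X) f"
    and "\<And>W. W \<in> subdiff F X \<Longrightarrow> W = V X"
  shows "(f has_derivative inner (V X)) (at X)"
  by (rule has_derivative_if_continuous_subgradient[where B = B and F = F])
    (use assms subdiff_selection_continuous_at[OF assms] in auto)

lemma egrad_eqI:
  assumes "((\<lambda>y. real_of_ereal (g y)) has_derivative inner G) (at x)"
  shows "egrad g x = G"
proof -
  have "((\<lambda>y. real_of_ereal (g y)) has_derivative inner (egrad g x)) (at x)"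
    unfolding egrad_def by (rule someI[of "\<lambda>u. (_ has_derivative (\<lambda>h. inner u h)) _"]) (use assms in simp)
  then have "inner (egrad g x) = inner G"
    using assms has_derivative_unique by blast
  then have "inner (egrad g x - G) (egrad g x - G) = 0"
    by (metis inner_diff_left right_minus_eq)
  then show ?thesis by simp
qed

section \<open>Legendre functions\<close>

lemma Gamma0_not_MInf: "Gamma0 g \<Longrightarrow> g x \<noteq> -\<infinity>"
  unfolding Gamma0_def by blast

lemma Gamma0_finite_on_edom:
  assumes "Gamma0 g" "x \<in> edom g"
  shows "g x = ereal (real_of_ereal (g x))"
  using assms Gamma0_not_MInf[OF assms(1), of x] unfolding edom_def by (cases "g x") auto

lemma Gamma0_convex_ineq:
  assumes "Gamma0 g" "g x \<le> ereal a" "g y \<le> ereal b" "0 \<le> t" "t \<le> 1"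
  shows "g ((1 - t) *\<^sub>R x + t *\<^sub>R y) \<le> ereal ((1 - t) * a + t * b)"
proof -
  have "convex (epigraph g)" using assms(1) unfolding Gamma0_def by blast
  then have "(1 - t) *\<^sub>R (x, a) + t *\<^sub>R (y, b) \<in> epigraph g"
    by (rule convexD) (use assms in \<open>auto simp: epigraph_def\<close>)
  then show ?thesis by (simp add: epigraph_def)
qed

lemma convex_edom:
  assumes "Gamma0 g"
  shows "convex (edom g)"
proof (rule convexI)
  fix x y :: 'a and u v :: real
  assume xy: "x \<in> edom g" "y \<in> edom g" and uv: "0 \<le> u" "0 \<le> v" "u + v = 1"
  have "g ((1 - v) *\<^sub>R x + v *\<^sub>R y)
      \<le> ereal ((1 - v) * real_of_ereal (g x) + v * real_of_ereal (g y))"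
    using Gamma0_convex_ineq[OF assms] Gamma0_finite_on_edom[OF assms] xy uv by simp
  then have "g ((1 - v) *\<^sub>R x + v *\<^sub>R y) < \<infinity>" by (rule le_less_trans) simp
  moreover have "u = 1 - v" using uv by simp
  ultimately show "u *\<^sub>R x + v *\<^sub>R y \<in> edom g" unfolding edom_def by simp
qed

lemma convex_on_interior_edom:
  assumes g: "Gamma0 g"
  shows "convex_on (interior (edom g)) (\<lambda>x. real_of_ereal (g x))"
proof
  show conv: "convex (interior (edom g))" using convex_edom[OF g] by simp
  fix t :: real and x y
  assume t: "0 < t" "t < 1" and xy: "x \<in> interior (edom g)" "y \<in> interior (edom g)"
  let ?m = "(1 - t) *\<^sub>R x + t *\<^sub>R y"
  have fin: "g z = ereal (real_of_ereal (g z))" if "z \<in> interior (edom g)" for z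
    using Gamma0_finite_on_edom[OF g] interior_subset that by blast
  have "?m \<in> interior (edom g)" using convexD_alt[OF conv xy] t by simp
  then have "ereal (real_of_ereal (g ?m)) = g ?m" using fin by simp
  also have "\<dots> \<le> ereal ((1 - t) * real_of_ereal (g x) + t * real_of_ereal (g y))"
    using Gamma0_convex_ineq[OF g] fin xy t by simp
  finally show "real_of_ereal (g ?m) \<le> (1 - t) * real_of_ereal (g x) + t * real_of_ereal (g y)"
    by simp
qed

lemma continuous_on_interior_edom:
  "Gamma0 g \<Longrightarrow> continuous_on (interior (edom g)) (\<lambda>x. real_of_ereal (g x))"
  by (rule convex_on_continuous[OF open_interior convex_on_interior_edom])

lemma epigraph_point_not_rel_interior:
  fixes g :: "'u::euclidean_space \<Rightarrow> ereal"
  assumes "g x = ereal r"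
  shows "(x, r) \<notin> rel_interior (epigraph g)"
proof
  assume "(x, r) \<in> rel_interior (epigraph g)"
  then obtain T where T: "open T" "(x, r) \<in> T" "T \<inter> affine hull (epigraph g) \<subseteq> epigraph g"
    unfolding mem_rel_interior by blast
  obtain e where e: "e > 0" "ball (x, r) e \<subseteq> T"
    using T(1,2) open_contains_ball by blast
  \<comment> \<open>(x, r - e/2) lies on the vertical line through two points of the epigraph\<close>
  have "(x, r - e / 2) = (1 + e / 2) *\<^sub>R (x, r) + (- (e / 2)) *\<^sub>R (x, r + 1)"
    by (simp add: algebra_simps)
  also have "\<dots> \<in> affine hull (epigraph g)"
    using assms by (intro mem_affine[OF affine_affine_hull] hull_inc) (auto simp: epigraph_def)
  finally have "(x, r - e / 2) \<in> T \<inter> affine hull (epigraph g)"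
    using e by (auto simp: dist_Pair_Pair subset_iff)
  then have "g x \<le> ereal (r - e / 2)" using T(3) by (auto simp: epigraph_def)
  then show False using assms e(1) by simp
qed

lemma epigraph_supporting_slope_pos:
  assumes g: "Gamma0 g" and x: "x \<in> interior (edom g)" and gx: "g x = ereal r"
    and "(u, c) \<noteq> 0"
    and supp: "\<And>z s. g z \<le> ereal s \<Longrightarrow> inner u x + c * r \<le> inner u z + c * s"
  shows "c > 0"
proof -
  have "c \<ge> 0" using supp[of x "r + 1"] gx by (simp add: algebra_simps)
  moreover have "c \<noteq> 0"
  proof
    assume c: "c = 0"
    then have "u \<noteq> 0" using \<open>(u, c) \<noteq> 0\<close> by (auto simp: zero_prod_def)
    obtain e where e: "e > 0" "ball x e \<subseteq> edom g" using x mem_interior by blast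
    define z where "z = x - (e / 2 / norm u) *\<^sub>R u"
    have "dist x z = e / 2" using \<open>u \<noteq> 0\<close> e(1) by (simp add: z_def dist_norm)
    then have "z \<in> edom g" using e by auto
    then have "inner u x \<le> inner u z"
      using supp[of z "real_of_ereal (g z)"] Gamma0_finite_on_edom[OF g] c by simp
    moreover have "inner u z = inner u x - e / 2 * norm u"
      using \<open>u \<noteq> 0\<close> by (simp add: z_def inner_diff_right dot_square_norm power2_eq_square)
    moreover have "e / 2 * norm u > 0" using \<open>u \<noteq> 0\<close> e(1) by simp
    ultimately show False by linarith
  qed
  ultimately show ?thesis by simp
qed

lemma Gamma0_subdiff_nonempty:
  assumes g: "Gamma0 g" and x: "x \<in> interior (edom g)"
  shows "subdiff g x \<noteq> {}"
proof -
  define r where "r = real_of_ereal (g x)"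
  have gx: "g x = ereal r"
    unfolding r_def using Gamma0_finite_on_edom[OF g] x interior_subset by blast
  have "convex (epigraph g)" using g unfolding Gamma0_def by blast
  moreover have "(x, r) \<in> epigraph g" using gx by (simp add: epigraph_def)
  ultimately obtain a where "a \<noteq> 0" and supp: "\<And>p. p \<in> epigraph g \<Longrightarrow> inner a (x, r) \<le> inner a p"
    using supporting_hyperplane_rel_boundary epigraph_point_not_rel_interior[of g, OF gx] by blast
  obtain u c where a: "a = (u, c)" by (cases a) auto
  have supp': "inner u x + c * r \<le> inner u z + c * s" if "g z \<le> ereal s" for z s
    using supp[of "(z, s)"] that by (simp add: a epigraph_def)
  have "c > 0" using epigraph_supporting_slope_pos[OF g x gx _ supp'] \<open>a \<noteq> 0\<close> a by blast
  have "(- 1 / c) *\<^sub>R u \<in> subdiff g x"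
    unfolding subdiff_def
  proof clarify
    fix z
    show "ereal (inner (z - x) ((- 1 / c) *\<^sub>R u)) + g x \<le> g z"
    proof (cases "g z")
      case (real s)
      have "c * (inner (z - x) ((- 1 / c) *\<^sub>R u) + r) \<le> c * s"
        using supp'[of z s] real \<open>c > 0\<close> by (simp add: algebra_simps inner_commute)
      then show ?thesis using real gx \<open>c > 0\<close> by simp
    qed (use Gamma0_not_MInf[OF g] in auto)
  qed
  then show ?thesis by blast
qed

lemma legendre_Gamma0: "legendre g \<Longrightarrow> Gamma0 g"
  unfolding legendre_def by blast

lemma legendre_subdiff_unique:
  "legendre g \<Longrightarrow> u \<in> subdiff g x \<Longrightarrow> v \<in> subdiff g x \<Longrightarrow> u = v"
  unfolding legendre_def by blast

lemma legendre_subdiff_interior: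
  assumes g: "legendre g" and x: "x \<in> interior (edom g)"
  shows "subdiff g x = {egrad g x}"
proof -
  have G0: "Gamma0 g" using g by (rule legendre_Gamma0)
  have "\<forall>y\<in>interior (edom g). \<exists>v. v \<in> subdiff g y"
    using Gamma0_subdiff_nonempty[OF G0] by blast
  then obtain V where "\<forall>y\<in>interior (edom g). V y \<in> subdiff g y"
    by (rule bchoice[THEN exE])
  then have V: "\<And>y. y \<in> interior (edom g) \<Longrightarrow> V y \<in> subdiff g y" by blast
  have "((\<lambda>y. real_of_ereal (g y)) has_derivative inner (V x)) (at x)"
  proof (rule has_derivative_if_unique_subgradient[OF open_interior x V])
    show "g y = ereal (real_of_ereal (g y))" if "y \<in> interior (edom g)" for y
      using Gamma0_finite_on_edom[OF G0] interior_subset that by (metis subsetD)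
    show "continuous (at x) (\<lambda>y. real_of_ereal (g y))"
      using continuous_on_interior_edom[OF G0] x
      by (simp add: continuous_on_eq_continuous_at[OF open_interior])
    show "W = V x" if "W \<in> subdiff g x" for W
      using legendre_subdiff_unique[OF g that V[OF x]] .
  qed
  then have egrad: "egrad g x = V x" by (rule egrad_eqI)
  show ?thesis
  proof
    show "subdiff g x \<subseteq> {egrad g x}"
    proof
      fix W assume "W \<in> subdiff g x"
      then show "W \<in> {egrad g x}"
        using legendre_subdiff_unique[OF g \<open>W \<in> subdiff g x\<close> V[OF x]] egrad by simp
    qed
    show "{egrad g x} \<subseteq> subdiff g x" using V[OF x] egrad by simp
  qed
qed

lemma legendre_egrad_in_subdiff:
  "legendre g \<Longrightarrow> x \<in> interior (edom g) \<Longrightarrow> egrad g x \<in> subdiff g x"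
  using legendre_subdiff_interior[of g x] by simp

lemma legendre_strictly_convex_interior:
  assumes g: "legendre g"
  shows "strictly_convex_on_e (interior (edom g)) g"
proof -
  have "convex (interior (edom g))" using convex_edom[OF legendre_Gamma0[OF g]] by simp
  moreover have "interior (edom g) \<subseteq> {z. subdiff g z \<noteq> {}}"
    using Gamma0_subdiff_nonempty[OF legendre_Gamma0[OF g]] by blast
  ultimately show ?thesis using g unfolding legendre_def by blast
qed

lemma legendre_eq_if_subgradient_level:
  assumes g: "legendre g" and x: "x \<in> interior (edom g)" and y: "y \<in> interior (edom g)"
    and le: "g y \<le> g x" and ge: "inner (y - x) (egrad g x) \<ge> 0"
  shows "y = x"
proof (rule ccontr)
  assume "y \<noteq> x"
  have G0: "Gamma0 g" using g by (rule legendre_Gamma0)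
  define m where "m = (1 - 1 / 2) *\<^sub>R x + (1 / 2 :: real) *\<^sub>R y"
  have m: "m \<in> interior (edom g)"
    unfolding m_def by (rule convexD_alt[OF _ x y]) (use convex_edom[OF G0] in auto)
  have fin: "g z = ereal (real_of_ereal (g z))" if "z \<in> interior (edom g)" for z
    using Gamma0_finite_on_edom[OF G0] interior_subset that by (metis subsetD)
  obtain a b c where abc: "g x = ereal a" "g y = ereal b" "g m = ereal c"
    by (rule that[OF fin[OF x] fin[OF y] fin[OF m]])
  have "g m < ereal (1 - 1 / 2) * g x + ereal (1 / 2) * g y"
    unfolding m_def
    by (rule legendre_strictly_convex_interior[OF g, unfolded strictly_convex_on_e_def, rule_format])
      (use x y \<open>y \<noteq> x\<close> in auto)
  then have "c < a" using le abc by simp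
  moreover have "a + inner (m - x) (egrad g x) \<le> c"
    using subdiff_ineq[OF legendre_egrad_in_subdiff[OF g x] abc(1,3)] .
  moreover have "inner (m - x) (egrad g x) = inner (y - x) (egrad g x) / 2"
    by (simp add: m_def algebra_simps)
  ultimately show False using ge by linarith
qed

section \<open>Bregman distances and projections\<close>

lemma bregman_not_MInf:
  assumes "\<And>u. g u \<noteq> -\<infinity>"
  shows "bregman g y x \<noteq> -\<infinity>"
proof (cases "x \<in> interior (edom g)")
  case True
  then have "g x \<noteq> \<infinity>" using interior_subset unfolding edom_def by auto
  then show ?thesis using assms[of x] assms[of y] True unfolding bregman_def
    by (cases "g x"; cases "g y") auto
qed (simp add: bregman_def)

lemma eindicator_plus_bregman:
  assumes "\<And>u. g u \<noteq> -\<infinity>"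
  shows "eindicator C y + bregman g y x = (if y \<in> C then bregman g y x else \<infinity>)"
  using bregman_not_MInf[of g y x, OF assms] by (simp add: eindicator_def)

lemma bdist_eq_INF:
  assumes "\<And>u. g u \<noteq> -\<infinity>"
  shows "bdist C g x = (INF y\<in>C. bregman g y x)"
proof (rule antisym)
  show "bdist C g x \<le> (INF y\<in>C. bregman g y x)"
  proof (rule INF_greatest)
    fix y assume "y \<in> C"
    have "bdist C g x \<le> eindicator C y + bregman g y x"
      unfolding bdist_def benv_def by (rule INF_lower) simp
    then show "bdist C g x \<le> bregman g y x"
      using \<open>y \<in> C\<close> by (simp add: eindicator_plus_bregman[OF assms])
  qed
  show "(INF y\<in>C. bregman g y x) \<le> bdist C g x"
    unfolding bdist_def benv_def
    by (rule INF_greatest) (auto simp: eindicator_plus_bregman[OF assms] intro: INF_lower)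
qed

lemma mem_bproj_iff:
  assumes "\<And>u. g u \<noteq> -\<infinity>"
  shows "y \<in> bproj C g x \<longleftrightarrow> y \<in> C \<and> bregman g y x = bdist C g x \<and> bdist C g x < \<infinity>"
  using eindicator_plus_bregman[of g C y x, OF assms]
  by (auto simp: bproj_def bprox_def bdist_def)

section \<open>Spectral decomposition systems\<close>

lemma eq_if_norm_eq_inner_ge:
  fixes p q :: "'u::real_inner"
  assumes "norm p = norm q" "(norm p)\<^sup>2 \<le> inner p q"
  shows "p = q"
proof -
  have "(norm (p - q))\<^sup>2 = (norm p)\<^sup>2 - 2 * inner p q + (norm q)\<^sup>2"
    by (simp add: power2_norm_eq_inner inner_diff_left inner_diff_right inner_commute)
  also have "\<dots> \<le> 0" using assms by simp
  finally show ?thesis by simp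
qed

lemma eq_if_norm_segment_eq:
  fixes p q :: "'u::real_inner"
  assumes "norm p = r" "norm q = r" "norm ((1 - t) *\<^sub>R p + t *\<^sub>R q) = r" "0 < t" "t < 1"
  shows "p = q"
proof -
  have n1: "norm ((1 - t) *\<^sub>R p) = (1 - t) * r" using assms(1,5) by simp
  have n2: "norm (t *\<^sub>R q) = t * r" using assms(2,4) by simp
  have "norm ((1 - t) *\<^sub>R p + t *\<^sub>R q) = norm ((1 - t) *\<^sub>R p) + norm (t *\<^sub>R q)"
    by (simp only: n1 n2 assms(3)) (simp add: algebra_simps)
  then have "norm ((1 - t) *\<^sub>R p) *\<^sub>R (t *\<^sub>R q) = norm (t *\<^sub>R q) *\<^sub>R ((1 - t) *\<^sub>R p)"
    by (rule norm_triangle_eq[THEN iffD1])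
  then have "((1 - t) * r) *\<^sub>R (t *\<^sub>R q) = (t * r) *\<^sub>R ((1 - t) *\<^sub>R p)"
    by (simp only: n1 n2)
  then have "((1 - t) * t * r) *\<^sub>R q = ((1 - t) * t * r) *\<^sub>R p"
    by (simp add: ac_simps)
  moreover have "r = 0 \<Longrightarrow> p = q" using assms(1,2) by simp
  ultimately show ?thesis using assms(4,5) by auto
qed

lemma lin_isometry_inner:
  fixes L :: "'u::real_inner \<Rightarrow> 'v::real_inner"
  assumes "lin_isometry L"
  shows "inner (L u) (L v) = inner u v"
proof -
  have lin: "linear L" and norm: "\<And>w. norm (L w) = norm w"
    using assms unfolding lin_isometry_def by auto
  have "inner (L u) (L v) = ((norm (L (u + v)))\<^sup>2 - (norm (L u))\<^sup>2 - (norm (L v))\<^sup>2) / 2"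
    using dot_norm[of "L u" "L v"] linear_add[OF lin] by simp
  also have "\<dots> = inner u v" by (simp add: norm dot_norm)
  finally show ?thesis .
qed

lemma lin_isometry_inj:
  assumes "lin_isometry L" "L u = L v"
  shows "u = v"
  using assms linear_diff[of L u v] unfolding lin_isometry_def
  by (metis eq_iff_diff_eq_0 norm_eq_zero)

lemma compact_continuous_pos_bounded_below:
  fixes h :: "'u::metric_space \<Rightarrow> real"
  assumes "compact K" "continuous_on K h" "\<And>y. y \<in> K \<Longrightarrow> h y > 0"
  shows "\<exists>m>0. \<forall>y\<in>K. m \<le> h y"
proof (cases "K = {}")
  case False
  obtain y0 where "y0 \<in> K" "\<forall>y\<in>K. h y0 \<le> h y"
    using continuous_attains_inf[OF assms(1) False assms(2)] by blast
  then show ?thesis using assms(3) by blast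
qed (use zero_less_one in blast)

locale spectral_decomposition =
  fixes S :: "('x::euclidean_space \<Rightarrow> 'x) set" and \<gamma> :: "'h::euclidean_space \<Rightarrow> 'x"
    and A :: "'a set" and \<Lambda> :: "'a \<Rightarrow> 'x \<Rightarrow> 'h"
  assumes sds: "spectral_decomposition_system S \<gamma> A \<Lambda>"
begin

definition \<tau> :: "'x \<Rightarrow> 'x" where
  "\<tau> = (SOME \<tau>. invariant_fun S \<tau> \<and> (\<forall>x. \<tau> x \<in> orbit S x) \<and> (\<forall>a\<in>A. \<gamma> \<circ> \<Lambda> a = \<tau>))"

lemma tau_spec: "invariant_fun S \<tau> \<and> (\<forall>x. \<tau> x \<in> orbit S x) \<and> (\<forall>a\<in>A. \<gamma> \<circ> \<Lambda> a = \<tau>)"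
proof -
  have "\<exists>\<tau>. invariant_fun S \<tau> \<and> (\<forall>x. \<tau> x \<in> orbit S x) \<and> (\<forall>a\<in>A. \<gamma> \<circ> \<Lambda> a = \<tau>)"
    using sds unfolding spectral_decomposition_system_def by blast
  then show ?thesis unfolding \<tau>_def by (rule someI_ex)
qed

lemma gamma_Lambda: "a \<in> A \<Longrightarrow> \<gamma> (\<Lambda> a u) = \<tau> u"
  using tau_spec by (metis comp_apply)

lemma tau_in_orbit: "\<tau> u \<in> orbit S u"
  using tau_spec by blast

lemma tau_orbit: "y \<in> orbit S u \<Longrightarrow> \<tau> y = \<tau> u"
  using tau_spec unfolding orbit_def invariant_fun_def by auto

lemma ex_decomposition: "\<exists>a\<in>A. X = \<Lambda> a (\<gamma> X)"
  using sds unfolding spectral_decomposition_system_def by blast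

lemma inner_le_inner_gamma: "inner X Y \<le> inner (\<gamma> X) (\<gamma> Y)"
  using sds unfolding spectral_decomposition_system_def by blast

lemma Lambda_isometry: "a \<in> A \<Longrightarrow> lin_isometry (\<Lambda> a)"
  using sds unfolding spectral_decomposition_system_def by blast

lemma Lambda_inner: "a \<in> A \<Longrightarrow> inner (\<Lambda> a u) (\<Lambda> a v) = inner u v"
  using Lambda_isometry lin_isometry_inner by blast

lemma Lambda_norm: "a \<in> A \<Longrightarrow> norm (\<Lambda> a u) = norm u"
  using Lambda_isometry unfolding lin_isometry_def by blast

lemma Lambda_linear: "a \<in> A \<Longrightarrow> linear (\<Lambda> a)"
  using Lambda_isometry unfolding lin_isometry_def by blast

lemma Lambda_inj: "a \<in> A \<Longrightarrow> \<Lambda> a u = \<Lambda> a v \<Longrightarrow> u = v"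
  using Lambda_isometry lin_isometry_inj by blast

lemma isCont_Lambda: "a \<in> A \<Longrightarrow> isCont (\<Lambda> a) u"
  using Lambda_linear linear_conv_bounded_linear linear_continuous_at by blast

lemma isometry_group: "isometry_group S"
  using sds unfolding spectral_decomposition_system_def by blast

lemma S_isometry: "s \<in> S \<Longrightarrow> lin_isometry s"
  using isometry_group unfolding isometry_group_def by blast

lemma S_inner: "s \<in> S \<Longrightarrow> inner (s u) (s v) = inner u v"
  using S_isometry lin_isometry_inner by blast

lemma S_norm: "s \<in> S \<Longrightarrow> norm (s u) = norm u"
  using S_isometry[of s] unfolding lin_isometry_def by simp

lemma S_inverse:
  assumes "s \<in> S"
  obtains t where "t \<in> S" "\<And>u. t (s u) = u"
proof -
  obtain t where "t \<in> S" "t \<circ> s = id"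
    using isometry_group assms unfolding isometry_group_def by blast
  show thesis by (rule that[OF \<open>t \<in> S\<close>]) (rule pointfree_idE[OF \<open>t \<circ> s = id\<close>])
qed

lemma orbitI: "s \<in> S \<Longrightarrow> s u \<in> orbit S u"
  unfolding orbit_def by blast

lemma orbit_comp:
  assumes "s \<in> S" "y \<in> orbit S u"
  shows "s y \<in> orbit S u"
proof -
  obtain s' where "s' \<in> S" "y = s' u" using assms(2) unfolding orbit_def by blast
  moreover have "s \<circ> s' \<in> S"
    using isometry_group assms(1) \<open>s' \<in> S\<close> unfolding isometry_group_def by blast
  ultimately show ?thesis using orbitI[of "s \<circ> s'" u] by simp
qed

lemma norm_orbit: "y \<in> orbit S u \<Longrightarrow> norm y = norm u"
  unfolding orbit_def using S_norm by auto

lemma orbit_eq_tau_fibre: "orbit S u = {y. \<tau> y = \<tau> u}"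
proof
  show "orbit S u \<subseteq> {y. \<tau> y = \<tau> u}" using tau_orbit by blast
  show "{y. \<tau> y = \<tau> u} \<subseteq> orbit S u"
  proof
    fix y assume "y \<in> {y. \<tau> y = \<tau> u}"
    obtain s where s: "s \<in> S" "\<tau> y = s y" using tau_in_orbit[of y] unfolding orbit_def by blast
    obtain t where t: "t \<in> S" "\<And>v. t (s v) = v" using S_inverse[OF s(1)] by blast
    have "y = t (\<tau> u)" using t(2)[of y] s(2) \<open>y \<in> _\<close> by simp
    then show "y \<in> orbit S u" using orbit_comp[OF t(1) tau_in_orbit] by simp
  qed
qed

lemma invariant_fun_orbit: "invariant_fun S f \<Longrightarrow> y \<in> orbit S u \<Longrightarrow> f y = f u"
  unfolding invariant_fun_def orbit_def by auto

lemma invariant_set_orbit: "invariant_set S D \<Longrightarrow> u \<in> D \<Longrightarrow> y \<in> orbit S u \<Longrightarrow> y \<in> D"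
  unfolding invariant_set_def orbit_def by auto

lemma tau_in_invariant_set: "invariant_set S D \<Longrightarrow> u \<in> D \<Longrightarrow> \<tau> u \<in> D"
  using invariant_set_orbit tau_in_orbit by blast

lemma norm_tau: "norm (\<tau> u) = norm u"
  using norm_orbit[OF tau_in_orbit] .

lemma inner_le_inner_tau: "inner u v \<le> inner (\<tau> u) (\<tau> v)"
proof -
  obtain a where a: "a \<in> A" using ex_decomposition by blast
  have "inner u v = inner (\<Lambda> a u) (\<Lambda> a v)" using Lambda_inner[OF a] by simp
  also have "\<dots> \<le> inner (\<tau> u) (\<tau> v)"
    using inner_le_inner_gamma[of "\<Lambda> a u" "\<Lambda> a v"] gamma_Lambda[OF a] by simp
  finally show ?thesis .
qed

lemma norm_gamma: "norm (\<gamma> X) = norm X"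
proof -
  obtain a where "a \<in> A" "X = \<Lambda> a (\<gamma> X)" using ex_decomposition by blast
  then show ?thesis using Lambda_norm[of a "\<gamma> X"] by simp
qed

lemma inner_gamma_gamma: "inner (\<gamma> X) (\<gamma> X) = inner X X"
  by (simp add: norm_gamma flip: power2_norm_eq_inner)

lemma tau_gamma: "\<tau> (\<gamma> X) = \<gamma> X"
proof -
  obtain a where "a \<in> A" "X = \<Lambda> a (\<gamma> X)" using ex_decomposition by blast
  then show ?thesis using gamma_Lambda[of a "\<gamma> X"] by simp
qed

lemma gamma_Lambda_gamma: "a \<in> A \<Longrightarrow> \<gamma> (\<Lambda> a (\<gamma> X)) = \<gamma> X"
  using gamma_Lambda tau_gamma by simp

lemma dist_gamma_le: "dist (\<gamma> X) (\<gamma> Y) \<le> dist X Y"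
proof -
  have "(norm (\<gamma> X - \<gamma> Y))\<^sup>2 \<le> (norm (X - Y))\<^sup>2"
    using inner_le_inner_gamma[of X Y] by (simp add: dot_norm_neg norm_gamma)
  then show ?thesis unfolding dist_norm by (rule power2_le_imp_le) simp
qed

lemma isCont_gamma: "isCont \<gamma> X"
  unfolding continuous_at_eps_delta using dist_gamma_le le_less_trans by blast

lemma simultaneous_decomposition:
  assumes eq: "inner X Y = inner (\<gamma> X) (\<gamma> Y)"
  obtains a where "a \<in> A" "X = \<Lambda> a (\<gamma> X)" "Y = \<Lambda> a (\<gamma> Y)"
proof -
  define W where "W = X + Y"
  obtain a where a: "a \<in> A" "W = \<Lambda> a (\<gamma> W)" using ex_decomposition by blast
  have "(norm (\<gamma> X + \<gamma> Y))\<^sup>2 = (norm W)\<^sup>2"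
    using dot_norm[of "\<gamma> X" "\<gamma> Y"] dot_norm[of X Y] eq by (simp add: W_def norm_gamma)
  then have "norm (\<gamma> W) = norm (\<gamma> X + \<gamma> Y)"
    by (simp add: norm_gamma)
  moreover have "(norm (\<gamma> W))\<^sup>2 \<le> inner (\<gamma> W) (\<gamma> X + \<gamma> Y)"
    using inner_le_inner_gamma[of W X] inner_le_inner_gamma[of W Y]
    by (simp add: norm_gamma power2_norm_eq_inner W_def inner_add_right)
  ultimately have "\<gamma> W = \<gamma> X + \<gamma> Y" by (rule eq_if_norm_eq_inner_ge)
  define P Q where "P = \<Lambda> a (\<gamma> X)" and "Q = \<Lambda> a (\<gamma> Y)"
  have PQ: "P + Q = X + Y"
    using a \<open>\<gamma> W = \<gamma> X + \<gamma> Y\<close> linear_add[OF Lambda_linear[OF a(1)]] by (simp add: P_def Q_def W_def)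
  \<comment> \<open>each of the four cross terms of inner (P + Q) (X + Y) is bounded by the corresponding
      term of the expansion of (norm (X + Y))^2, so all bounds are equalities\<close>
  have "inner P X \<le> (norm X)\<^sup>2" "inner Q Y \<le> (norm Y)\<^sup>2" "inner P Y \<le> inner X Y" "inner Q X \<le> inner X Y"
    using inner_le_inner_gamma[of P X] inner_le_inner_gamma[of Q Y] inner_le_inner_gamma[of P Y]
      inner_le_inner_gamma[of Q X] eq
    by (simp_all add: P_def Q_def gamma_Lambda_gamma[OF a(1)] power2_norm_eq_inner inner_gamma_gamma
        inner_commute)
  moreover have "inner (P + Q) (X + Y) = (norm X)\<^sup>2 + (norm Y)\<^sup>2 + 2 * inner X Y"
    unfolding PQ by (simp add: power2_norm_eq_inner inner_add_left inner_add_right inner_commute)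
  moreover have norms: "norm P = norm X" "norm Q = norm Y"
    by (simp_all add: P_def Q_def Lambda_norm[OF a(1)] norm_gamma)
  ultimately have "(norm P)\<^sup>2 \<le> inner P X" "(norm Q)\<^sup>2 \<le> inner Q Y"
    by (simp_all add: inner_add_left inner_add_right)
  then have "P = X" "Q = Y"
    using eq_if_norm_eq_inner_ge[OF norms(1)] eq_if_norm_eq_inner_ge[OF norms(2)] by auto
  then show thesis using that a(1) by (simp add: P_def Q_def)
qed

lemma compact_orbit: "compact (orbit S u)"
proof -
  have sphere: "orbit S u \<subseteq> sphere 0 (norm u)" using norm_orbit by auto
  have "closure (orbit S u) \<subseteq> orbit S u"
  proof
    fix w assume w: "w \<in> closure (orbit S u)"
    have "orbit S u \<subseteq> {y. inner w y \<le> inner (\<tau> w) (\<tau> u)}"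
    proof
      fix y assume "y \<in> orbit S u"
      then show "y \<in> {y. inner w y \<le> inner (\<tau> w) (\<tau> u)}"
        using inner_le_inner_tau[of w y] tau_orbit[of y u] by simp
    qed
    then have "closure (orbit S u) \<subseteq> {y. inner w y \<le> inner (\<tau> w) (\<tau> u)}"
      by (rule closure_minimal) (rule closed_halfspace_le)
    then have "(norm (\<tau> w))\<^sup>2 \<le> inner (\<tau> w) (\<tau> u)"
      using w by (auto simp: norm_tau power2_norm_eq_inner)
    moreover have "norm w = norm u"
      using closure_minimal[OF sphere closed_sphere] w by auto
    ultimately have "\<tau> w = \<tau> u" using eq_if_norm_eq_inner_ge norm_tau by metis
    then show "w \<in> orbit S u" by (simp add: orbit_eq_tau_fibre)
  qed
  then have "closed (orbit S u)" by (simp add: closure_subset_eq)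
  moreover have "bounded (orbit S u)" using sphere bounded_sphere bounded_subset by blast
  ultimately show ?thesis by (simp add: compact_eq_bounded_closed)
qed

lemma inner_Lambda_le_orbit:
  assumes "a \<in> A" "c \<in> A"
  obtains y where "y \<in> orbit S u" "inner (\<Lambda> a u) (\<Lambda> c v) \<le> inner y v"
proof -
  obtain s where s: "s \<in> S" "\<tau> v = s v" using tau_in_orbit[of v] unfolding orbit_def by blast
  obtain t where t: "t \<in> S" "\<And>w. t (s w) = w" using S_inverse[OF s(1)] by blast
  have "inner (\<Lambda> a u) (\<Lambda> c v) \<le> inner (\<tau> u) (\<tau> v)"
    using inner_le_inner_gamma[of "\<Lambda> a u" "\<Lambda> c v"] gamma_Lambda assms by simp
  also have "\<dots> = inner (t (\<tau> u)) v"
    using S_inner[OF t(1), of "\<tau> u" "s v"] s(2) t(2) by simp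
  finally show thesis using that orbit_comp[OF t(1) tau_in_orbit] by blast
qed

lemma ex_orbit_inner_diff_le:
  assumes a: "a \<in> A" and c: "c \<in> A" and g: "\<Lambda> a g = \<Lambda> c g"
  shows "\<exists>y\<in>orbit S z. inner (z - y) g \<le> \<epsilon> * (inner (\<Lambda> a z) (\<Lambda> c z) - inner y z)"
proof -
  obtain y where y: "y \<in> orbit S z"
    and le: "inner (\<Lambda> a z) (\<Lambda> c (g - \<epsilon> *\<^sub>R z)) \<le> inner y (g - \<epsilon> *\<^sub>R z)"
    using inner_Lambda_le_orbit[OF a c] by blast
  have "inner (\<Lambda> a z) (\<Lambda> c (g - \<epsilon> *\<^sub>R z)) = inner z g - \<epsilon> * inner (\<Lambda> a z) (\<Lambda> c z)"
    using Lambda_linear[OF c] Lambda_inner[OF a, of z g] g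
    by (simp add: linear_diff linear_cmul inner_diff_right)
  then have "inner (z - y) g \<le> \<epsilon> * (inner (\<Lambda> a z) (\<Lambda> c z) - inner y z)"
    using le by (simp add: inner_commute algebra_simps)
  then show ?thesis using y by blast
qed

lemma norm_le_inner_Lambda_if_unique_orbit_maximizer:
  assumes a: "a \<in> A" and c: "c \<in> A" and g: "\<Lambda> a g = \<Lambda> c g" "\<tau> g = g"
    and max: "\<And>y. y \<in> orbit S z \<Longrightarrow> inner z g \<le> inner y g \<Longrightarrow> y = z"
  shows "(norm z)\<^sup>2 \<le> inner (\<Lambda> a z) (\<Lambda> c z)"
proof (rule ccontr)
  define p where "p = inner (\<Lambda> a z) (\<Lambda> c z)"
  assume "\<not> (norm z)\<^sup>2 \<le> inner (\<Lambda> a z) (\<Lambda> c z)"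
  then have p: "p < (norm z)\<^sup>2" by (simp add: p_def)
  have "inner z g \<le> inner (\<tau> z) g" using inner_le_inner_tau[of z g] g(2) by simp
  then have tz: "\<tau> z = z" using max[OF tau_in_orbit] by blast
  have below: "inner y g \<le> inner z g" if "y \<in> orbit S z" for y
    using inner_le_inner_tau[of y g] tau_orbit[OF that] tz g(2) by simp
  \<comment> \<open>the points given by ex_orbit_inner_diff_le stay in a compact set K avoiding z, on which
      inner (z - y) g is bounded away from 0\<close>
  define K where "K = orbit S z \<inter> {y. inner z y \<le> p}"
  have in_K: "y \<in> K" if "y \<in> orbit S z" "inner (z - y) g \<le> \<epsilon> * (p - inner y z)" "\<epsilon> > 0" for y \<epsilon>
  proof -
    have "0 \<le> \<epsilon> * (p - inner y z)" using below[OF that(1)] that(2) by (simp add: inner_diff_left)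
    then show ?thesis using that(1,3) by (simp add: K_def zero_le_mult_iff inner_commute)
  qed
  have "compact K" unfolding K_def by (intro compact_Int_closed compact_orbit closed_halfspace_le)
  moreover have "continuous_on K (\<lambda>y. inner (z - y) g)" by (intro continuous_intros)
  moreover have "inner (z - y) g > 0" if "y \<in> K" for y
  proof -
    have "y \<noteq> z" using that p by (auto simp: K_def power2_norm_eq_inner)
    then show ?thesis using below[of y] max[of y] that by (force simp: K_def inner_diff_left)
  qed
  ultimately have "\<exists>m>0. \<forall>y\<in>K. m \<le> inner (z - y) g"
    by (rule compact_continuous_pos_bounded_below)
  then obtain m where m: "m > 0" "\<forall>y\<in>K. m \<le> inner (z - y) g" by blast
  define \<epsilon> where "\<epsilon> = m / (2 * ((norm z)\<^sup>2 + 1))"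
  have pos: "0 < 2 + 2 * (norm z)\<^sup>2" by (simp add: add_pos_nonneg)
  then have \<epsilon>: "\<epsilon> > 0" using m(1) by (simp add: \<epsilon>_def)
  obtain y where y: "y \<in> orbit S z" and close: "inner (z - y) g \<le> \<epsilon> * (p - inner y z)"
    using ex_orbit_inner_diff_le[OF a c g(1)] by (auto simp: p_def)
  have "- inner y z \<le> (norm z)\<^sup>2"
    using norm_cauchy_schwarz[of "- y" z] norm_orbit[OF y] by (simp add: power2_eq_square)
  then have "\<epsilon> * (p - inner y z) \<le> \<epsilon> * (2 * (norm z)\<^sup>2)"
    using p \<epsilon> by (intro mult_left_mono) auto
  also have "\<dots> < m" using m(1) pos by (simp add: \<epsilon>_def field_simps)
  finally show False using m(2) in_K[OF y close \<epsilon>] close by force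
qed

lemma Lambda_eq_if_unique_orbit_maximizer:
  assumes "a \<in> A" "c \<in> A" "\<Lambda> a g = \<Lambda> c g" "\<tau> g = g"
    and "\<And>y. y \<in> orbit S z \<Longrightarrow> inner z g \<le> inner y g \<Longrightarrow> y = z"
  shows "\<Lambda> a z = \<Lambda> c z"
proof (rule eq_if_norm_eq_inner_ge)
  show "norm (\<Lambda> a z) = norm (\<Lambda> c z)" using Lambda_norm assms(1,2) by simp
  show "(norm (\<Lambda> a z))\<^sup>2 \<le> inner (\<Lambda> a z) (\<Lambda> c z)"
    using norm_le_inner_Lambda_if_unique_orbit_maximizer[OF assms] Lambda_norm assms(1) by simp
qed

end

section \<open>Spectral functions\<close>

locale spectral_function = spectral_decomposition S \<gamma> A \<Lambda>
  for S :: "('x::euclidean_space \<Rightarrow> 'x) set" and \<gamma> :: "'h::euclidean_space \<Rightarrow> 'x"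
    and A :: "'a set" and \<Lambda> :: "'a \<Rightarrow> 'x \<Rightarrow> 'h" +
  fixes \<psi> :: "'x \<Rightarrow> ereal"
  assumes legendre: "legendre \<psi>" and invariant: "invariant_fun S \<psi>"
begin

lemma psi_tau: "\<psi> (\<tau> u) = \<psi> u"
  using invariant_fun_orbit[OF invariant tau_in_orbit] .

lemma psi_gamma_Lambda: "a \<in> A \<Longrightarrow> \<psi> (\<gamma> (\<Lambda> a u)) = \<psi> u"
  by (simp add: gamma_Lambda psi_tau)

lemma psi_not_MInf: "\<psi> u \<noteq> -\<infinity>"
  using Gamma0_not_MInf[OF legendre_Gamma0[OF legendre]] .

lemma psi_comp_not_MInf: "(\<psi> \<circ> \<gamma>) Y \<noteq> -\<infinity>"
  using psi_not_MInf by simp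

lemma psi_finite: "u \<in> interior (edom \<psi>) \<Longrightarrow> \<psi> u = ereal (real_of_ereal (\<psi> u))"
  using Gamma0_finite_on_edom[OF legendre_Gamma0[OF legendre]] interior_subset by (metis subsetD)

lemma open_gamma_vimage_interior: "open (\<gamma> -` interior (edom \<psi>))"
  using continuous_open_vimage[OF open_interior isCont_gamma] .

lemma interior_edom_comp: "X \<in> interior (edom (\<psi> \<circ> \<gamma>)) \<longleftrightarrow> \<gamma> X \<in> interior (edom \<psi>)"
proof
  assume X: "X \<in> interior (edom (\<psi> \<circ> \<gamma>))"
  obtain a where a: "a \<in> A" "X = \<Lambda> a (\<gamma> X)" using ex_decomposition by blast
  have "\<Lambda> a -` interior (edom (\<psi> \<circ> \<gamma>)) \<subseteq> edom \<psi>"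
    using interior_subset psi_gamma_Lambda[OF a(1)] by (fastforce simp: edom_def)
  moreover have "open (\<Lambda> a -` interior (edom (\<psi> \<circ> \<gamma>)))"
    using continuous_open_vimage[OF open_interior isCont_Lambda[OF a(1)]] .
  ultimately have "\<Lambda> a -` interior (edom (\<psi> \<circ> \<gamma>)) \<subseteq> interior (edom \<psi>)"
    by (rule interior_maximal)
  then show "\<gamma> X \<in> interior (edom \<psi>)" using X a(2) by auto
next
  assume "\<gamma> X \<in> interior (edom \<psi>)"
  moreover have "\<gamma> -` interior (edom \<psi>) \<subseteq> interior (edom (\<psi> \<circ> \<gamma>))"
    using interior_subset open_gamma_vimage_interior
    by (intro interior_maximal) (auto simp: edom_def)
  ultimately show "X \<in> interior (edom (\<psi> \<circ> \<gamma>))" by auto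
qed

lemma Lambda_subdiff_comp:
  assumes a: "a \<in> A" and Y: "Y = \<Lambda> a (\<gamma> Y)" and u: "u \<in> subdiff \<psi> (\<gamma> Y)"
  shows "\<Lambda> a u \<in> subdiff (\<psi> \<circ> \<gamma>) Y"
  unfolding subdiff_def
proof clarify
  fix W
  obtain c where c: "c \<in> A" "W = \<Lambda> c (\<gamma> W)" using ex_decomposition by blast
  obtain y where y: "y \<in> orbit S (\<gamma> W)" "inner (\<Lambda> c (\<gamma> W)) (\<Lambda> a u) \<le> inner y u"
    using inner_Lambda_le_orbit[OF c(1) a] by blast
  have "inner (W - Y) (\<Lambda> a u) \<le> inner (y - \<gamma> Y) u"
    using y(2) c(2) Lambda_inner[OF a, of "\<gamma> Y" u] Y by (simp add: inner_diff_left)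
  then have "ereal (inner (W - Y) (\<Lambda> a u)) + \<psi> (\<gamma> Y) \<le> ereal (inner (y - \<gamma> Y) u) + \<psi> (\<gamma> Y)"
    by (intro add_right_mono) simp
  also have "\<dots> \<le> \<psi> y" using u unfolding subdiff_def by blast
  also have "\<dots> = \<psi> (\<gamma> W)" using invariant_fun_orbit[OF invariant y(1)] .
  finally show "ereal (inner (W - Y) (\<Lambda> a u)) + (\<psi> \<circ> \<gamma>) Y \<le> (\<psi> \<circ> \<gamma>) W" by simp
qed

lemma gamma_subdiff_comp:
  assumes V: "V \<in> subdiff (\<psi> \<circ> \<gamma>) X" and fin: "\<psi> (\<gamma> X) = ereal c"
  shows "\<gamma> V \<in> subdiff \<psi> (\<gamma> X)" and "inner X V = inner (\<gamma> X) (\<gamma> V)"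
proof -
  obtain b where b: "b \<in> A" "V = \<Lambda> b (\<gamma> V)" using ex_decomposition by blast
  \<comment> \<open>test the subgradient inequality of V at the points \<Lambda> b u\<close>
  have ineq: "ereal (inner u (\<gamma> V) - inner X V) + ereal c \<le> \<psi> u" for u
  proof -
    have "ereal (inner (\<Lambda> b u - X) V) + (\<psi> \<circ> \<gamma>) X \<le> (\<psi> \<circ> \<gamma>) (\<Lambda> b u)"
      using V unfolding subdiff_def by blast
    moreover have "inner (\<Lambda> b u) V = inner u (\<gamma> V)" using Lambda_inner[OF b(1)] b(2) by metis
    ultimately show ?thesis using fin psi_gamma_Lambda[OF b(1)] by (simp add: inner_diff_left)
  qed
  have "inner (\<gamma> X) (\<gamma> V) \<le> inner X V" using ineq[of "\<gamma> X"] fin by simp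
  then show eq: "inner X V = inner (\<gamma> X) (\<gamma> V)" using inner_le_inner_gamma[of X V] by simp
  show "\<gamma> V \<in> subdiff \<psi> (\<gamma> X)"
    unfolding subdiff_def using ineq eq fin by (simp add: inner_diff_left)
qed

lemma subdiff_comp_unique:
  assumes x: "\<gamma> X \<in> interior (edom \<psi>)"
    and V1: "V1 \<in> subdiff (\<psi> \<circ> \<gamma>) X" and V2: "V2 \<in> subdiff (\<psi> \<circ> \<gamma>) X"
  shows "V1 = V2"
proof -
  define g where "g = egrad \<psi> (\<gamma> X)"
  have fin: "(\<psi> \<circ> \<gamma>) X = ereal (real_of_ereal (\<psi> (\<gamma> X)))" using psi_finite[OF x] by simp
  have gamma_sub: "\<gamma> V = g" if "V \<in> subdiff (\<psi> \<circ> \<gamma>) X" for V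
    using gamma_subdiff_comp(1)[OF that psi_finite[OF x]] legendre_subdiff_interior[OF legendre x]
    by (simp add: g_def)
  have norm_sub: "norm V = norm g" if "V \<in> subdiff (\<psi> \<circ> \<gamma>) X" for V
    using gamma_sub[OF that] norm_gamma[of V] by simp
  let ?M = "(1 - 1 / 2) *\<^sub>R V1 + (1 / 2 :: real) *\<^sub>R V2"
  have "?M \<in> subdiff (\<psi> \<circ> \<gamma>) X" by (rule subdiff_convex_combination[OF V1 V2 fin]) auto
  then show ?thesis
    by (intro eq_if_norm_segment_eq[of V1 "norm g" V2 "1 / 2"]) (use norm_sub V1 V2 in auto)
qed

lemma egrad_comp:
  assumes x: "\<gamma> X \<in> interior (edom \<psi>)" and a: "a \<in> A" "X = \<Lambda> a (\<gamma> X)"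
  shows "egrad (\<psi> \<circ> \<gamma>) X = \<Lambda> a (egrad \<psi> (\<gamma> X))"
proof -
  have "\<forall>Y. \<exists>b. b \<in> A \<and> Y = \<Lambda> b (\<gamma> Y)" using ex_decomposition by blast
  then obtain sel where sel: "\<And>Y. sel Y \<in> A" "\<And>Y. Y = \<Lambda> (sel Y) (\<gamma> Y)" by metis
  define V where "V Y = \<Lambda> (sel Y) (egrad \<psi> (\<gamma> Y))" for Y
  have V: "V Y \<in> subdiff (\<psi> \<circ> \<gamma>) Y" if "Y \<in> \<gamma> -` interior (edom \<psi>)" for Y
    unfolding V_def using that sel legendre_egrad_in_subdiff[OF legendre]
    by (intro Lambda_subdiff_comp) auto
  have "((\<lambda>Y. real_of_ereal ((\<psi> \<circ> \<gamma>) Y)) has_derivative inner (V X)) (at X)"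
  proof (rule has_derivative_if_unique_subgradient[OF open_gamma_vimage_interior _ V])
    show "X \<in> \<gamma> -` interior (edom \<psi>)" using x by simp
    show "(\<psi> \<circ> \<gamma>) Y = ereal (real_of_ereal ((\<psi> \<circ> \<gamma>) Y))" if "Y \<in> \<gamma> -` interior (edom \<psi>)" for Y
      using psi_finite that by simp
    have "isCont (\<lambda>y. real_of_ereal (\<psi> y)) (\<gamma> X)"
      using continuous_on_interior_edom[OF legendre_Gamma0[OF legendre]] x
      by (simp add: continuous_on_eq_continuous_at[OF open_interior])
    then show "isCont (\<lambda>Y. real_of_ereal ((\<psi> \<circ> \<gamma>) Y)) X"
      using isCont_o2[OF isCont_gamma] by simp
    show "W = V X" if "W \<in> subdiff (\<psi> \<circ> \<gamma>) X" for W
      using subdiff_comp_unique[OF x that V] x by simp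
  qed
  then have "egrad (\<psi> \<circ> \<gamma>) X = V X" by (rule egrad_eqI)
  moreover have "\<Lambda> a (egrad \<psi> (\<gamma> X)) \<in> subdiff (\<psi> \<circ> \<gamma>) X"
    using Lambda_subdiff_comp[OF a legendre_egrad_in_subdiff[OF legendre x]] .
  ultimately show ?thesis using subdiff_comp_unique[OF x _ V] x by simp
qed

lemma egrad_comp_in_subdiff:
  assumes "\<gamma> X \<in> interior (edom \<psi>)"
  shows "egrad (\<psi> \<circ> \<gamma>) X \<in> subdiff (\<psi> \<circ> \<gamma>) X"
proof -
  obtain a where a: "a \<in> A" "X = \<Lambda> a (\<gamma> X)" using ex_decomposition by blast
  show ?thesis
    using Lambda_subdiff_comp[OF a legendre_egrad_in_subdiff[OF legendre assms]] egrad_comp[OF assms a]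
    by simp
qed

lemma gamma_egrad_comp:
  assumes "\<gamma> X \<in> interior (edom \<psi>)"
  shows "\<gamma> (egrad (\<psi> \<circ> \<gamma>) X) = egrad \<psi> (\<gamma> X)"
  using gamma_subdiff_comp(1)[OF egrad_comp_in_subdiff[OF assms] psi_finite[OF assms]]
    legendre_subdiff_interior[OF legendre assms] by simp

lemma inner_egrad_comp:
  assumes "\<gamma> X \<in> interior (edom \<psi>)"
  shows "inner X (egrad (\<psi> \<circ> \<gamma>) X) = inner (\<gamma> X) (egrad \<psi> (\<gamma> X))"
  using gamma_subdiff_comp(2)[OF egrad_comp_in_subdiff[OF assms] psi_finite[OF assms]]
    gamma_egrad_comp[OF assms] by simp

lemma tau_egrad:
  assumes "\<gamma> X \<in> interior (edom \<psi>)"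
  shows "\<tau> (egrad \<psi> (\<gamma> X)) = egrad \<psi> (\<gamma> X)"
proof -
  obtain a where a: "a \<in> A" "X = \<Lambda> a (\<gamma> X)" using ex_decomposition by blast
  show ?thesis
    using gamma_egrad_comp[OF assms] egrad_comp[OF assms a] gamma_Lambda[OF a(1)] by simp
qed

lemma bregman_interior:
  "x \<in> interior (edom \<psi>) \<Longrightarrow> bregman \<psi> y x = \<psi> y - \<psi> x - ereal (inner (y - x) (egrad \<psi> x))"
  unfolding bregman_def by simp

lemma bregman_comp_interior:
  "\<gamma> X \<in> interior (edom \<psi>) \<Longrightarrow>
    bregman (\<psi> \<circ> \<gamma>) Y X = \<psi> (\<gamma> Y) - \<psi> (\<gamma> X) - ereal (inner (Y - X) (egrad (\<psi> \<circ> \<gamma>) X))"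
  unfolding bregman_def by (simp add: interior_edom_comp)

lemma bregman_gamma_le: "bregman \<psi> (\<gamma> Y) (\<gamma> X) \<le> bregman (\<psi> \<circ> \<gamma>) Y X"
proof (cases "\<gamma> X \<in> interior (edom \<psi>)")
  case True
  have "inner Y (egrad (\<psi> \<circ> \<gamma>) X) \<le> inner (\<gamma> Y) (egrad \<psi> (\<gamma> X))"
    using inner_le_inner_gamma[of Y "egrad (\<psi> \<circ> \<gamma>) X"] gamma_egrad_comp[OF True] by simp
  then have "inner (Y - X) (egrad (\<psi> \<circ> \<gamma>) X) \<le> inner (\<gamma> Y - \<gamma> X) (egrad \<psi> (\<gamma> X))"
    using inner_egrad_comp[OF True] by (simp add: inner_diff_left)
  moreover obtain p where "\<psi> (\<gamma> X) = ereal p" by (rule that[OF psi_finite[OF True]])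
  ultimately show ?thesis
    unfolding bregman_interior[OF True] bregman_comp_interior[OF True]
    using psi_not_MInf[of "\<gamma> Y"] by (cases "\<psi> (\<gamma> Y)") auto
next
  case False
  then show ?thesis by (simp add: bregman_def interior_edom_comp)
qed

lemma bregman_comp_Lambda:
  assumes a: "a \<in> A" "X = \<Lambda> a (\<gamma> X)"
  shows "bregman (\<psi> \<circ> \<gamma>) (\<Lambda> a y) X = bregman \<psi> y (\<gamma> X)"
proof (cases "\<gamma> X \<in> interior (edom \<psi>)")
  case True
  have "inner (\<Lambda> a y - X) (egrad (\<psi> \<circ> \<gamma>) X) = inner (y - \<gamma> X) (egrad \<psi> (\<gamma> X))"
    using egrad_comp[OF True a] Lambda_inner[OF a(1)] linear_diff[OF Lambda_linear[OF a(1)]] a(2)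
    by metis
  then show ?thesis
    unfolding bregman_interior[OF True] bregman_comp_interior[OF True]
    using psi_gamma_Lambda[OF a(1)] by simp
next
  case False
  then show ?thesis by (simp add: bregman_def interior_edom_comp)
qed

lemma gamma_const_on_segment:
  assumes x: "\<gamma> X \<in> interior (edom \<psi>)" and X': "\<gamma> X' = \<gamma> X"
    and orth: "inner (X' - X) (egrad (\<psi> \<circ> \<gamma>) X) = 0"
    and t: "0 \<le> t" "t \<le> 1" and Xt: "\<gamma> ((1 - t) *\<^sub>R X + t *\<^sub>R X') \<in> interior (edom \<psi>)"
  shows "\<gamma> ((1 - t) *\<^sub>R X + t *\<^sub>R X') = \<gamma> X"
proof -
  \<comment> \<open>\<psi> \<circ> \<gamma> is constant on the segment by convexity, and then strict convexity of \<psi>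
      pins down \<gamma>\<close>
  let ?Xt = "(1 - t) *\<^sub>R X + t *\<^sub>R X'" and ?G = "egrad (\<psi> \<circ> \<gamma>) X"
  obtain p q where p: "(\<psi> \<circ> \<gamma>) X = ereal p" and q: "(\<psi> \<circ> \<gamma>) ?Xt = ereal q"
    using psi_finite[OF x] psi_finite[OF Xt] by (metis comp_apply)
  have "q \<le> (1 - t) * p + t * p"
    using subdiff_convex_ineq[OF egrad_comp_in_subdiff[OF Xt] q p] p X' t by simp
  moreover have "?Xt - X = t *\<^sub>R (X' - X)" by (simp add: algebra_simps)
  then have "p \<le> q" using subdiff_ineq[OF egrad_comp_in_subdiff[OF x] p q] orth by simp
  ultimately have "\<psi> (\<gamma> ?Xt) \<le> \<psi> (\<gamma> X)" using p q by (simp add: algebra_simps)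
  moreover have "inner X ?G \<le> inner (\<gamma> ?Xt) (egrad \<psi> (\<gamma> X))"
  proof -
    have "inner ?Xt ?G = inner X ?G"
      using orth by (simp add: algebra_simps)
    then show ?thesis
      using inner_le_inner_gamma[of ?Xt ?G] gamma_egrad_comp[OF x] by simp
  qed
  then have "inner (\<gamma> ?Xt - \<gamma> X) (egrad \<psi> (\<gamma> X)) \<ge> 0"
    using inner_egrad_comp[OF x] by (simp add: inner_diff_left)
  ultimately show ?thesis by (rule legendre_eq_if_subgradient_level[OF legendre x Xt])
qed

lemma decomposition_if_Lambda_egrad:
  assumes x: "\<gamma> X \<in> interior (edom \<psi>)" and c: "c \<in> A"
    and G: "\<Lambda> c (egrad \<psi> (\<gamma> X)) = egrad (\<psi> \<circ> \<gamma>) X"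
  shows "X = \<Lambda> c (\<gamma> X)"
proof (rule ccontr)
  define X' where "X' = \<Lambda> c (\<gamma> X)"
  assume "X \<noteq> \<Lambda> c (\<gamma> X)"
  then have w: "norm (X' - X) > 0" by (simp add: X'_def)
  have X': "\<gamma> X' = \<gamma> X" by (simp add: X'_def gamma_Lambda_gamma[OF c])
  have orth: "inner (X' - X) (egrad (\<psi> \<circ> \<gamma>) X) = 0"
    using Lambda_inner[OF c, of "\<gamma> X" "egrad \<psi> (\<gamma> X)"] inner_egrad_comp[OF x] G
    by (simp add: X'_def inner_diff_left)
  obtain e where e: "e > 0" "ball X e \<subseteq> \<gamma> -` interior (edom \<psi>)"
    using open_gamma_vimage_interior x open_contains_ball by blast
  define t where "t = min (1 / 2) (e / (2 * norm (X' - X)))"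
  have t: "0 < t" "t < 1" using e(1) w by (auto simp: t_def)
  let ?Xt = "(1 - t) *\<^sub>R X + t *\<^sub>R X'"
  have "dist X ?Xt = t * norm (X' - X)"
    using t by (simp add: dist_norm norm_minus_commute algebra_simps flip: scaleR_right_diff_distrib)
  also have "\<dots> \<le> e / 2" using w by (simp add: t_def field_simps min_def)
  finally have "?Xt \<in> ball X e" using e(1) by simp
  then have "\<gamma> ?Xt \<in> interior (edom \<psi>)" using e(2) by blast
  then have "\<gamma> ?Xt = \<gamma> X" using gamma_const_on_segment[OF x X' orth] t by simp
  then have "X = X'"
    using X' norm_gamma t by (intro eq_if_norm_segment_eq[of X "norm (\<gamma> X)" X' t]) metis+
  then show False using w by simp
qed

lemma simultaneous_decomposition_if_bregman_eq:
  assumes eq: "bregman (\<psi> \<circ> \<gamma>) Z X = bregman \<psi> (\<gamma> Z) (\<gamma> X)"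
    and fin: "bregman \<psi> (\<gamma> Z) (\<gamma> X) < \<infinity>"
  obtains a where "a \<in> A" "X = \<Lambda> a (\<gamma> X)" "Z = \<Lambda> a (\<gamma> Z)"
proof -
  let ?G = "egrad (\<psi> \<circ> \<gamma>) X" and ?g = "egrad \<psi> (\<gamma> X)"
  have x: "\<gamma> X \<in> interior (edom \<psi>)"
  proof (rule ccontr)
    assume "\<gamma> X \<notin> interior (edom \<psi>)"
    then show False using fin by (simp add: bregman_def)
  qed
  obtain z where z: "\<psi> (\<gamma> Z) = ereal z"
    using fin psi_not_MInf[of "\<gamma> Z"] psi_finite[OF x] unfolding bregman_interior[OF x]
    by (cases "\<psi> (\<gamma> Z)") auto
  obtain p where "\<psi> (\<gamma> X) = ereal p" by (rule that[OF psi_finite[OF x]])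
  then have "inner (Z - X) ?G = inner (\<gamma> Z - \<gamma> X) ?g"
    using eq z
    unfolding bregman_interior[OF x] bregman_comp_interior[OF x] by simp
  then have "inner Z ?G = inner (\<gamma> Z) (\<gamma> ?G)"
    using inner_egrad_comp[OF x] gamma_egrad_comp[OF x] by (simp add: inner_diff_left)
  then obtain c where c: "c \<in> A" "Z = \<Lambda> c (\<gamma> Z)" "?G = \<Lambda> c (\<gamma> ?G)"
    by (rule simultaneous_decomposition)
  have "X = \<Lambda> c (\<gamma> X)"
    using decomposition_if_Lambda_egrad[OF x c(1)] c(3) gamma_egrad_comp[OF x] by simp
  then show thesis using that c(1,2) by blast
qed

section \<open>Projections onto spectral sets\<close>

lemma bdist_comp:
  assumes D: "invariant_set S D"
  shows "bdist (\<gamma> -` D) (\<psi> \<circ> \<gamma>) X = bdist D \<psi> (\<gamma> X)"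
  unfolding bdist_eq_INF[of "\<psi> \<circ> \<gamma>", OF psi_comp_not_MInf] bdist_eq_INF[OF psi_not_MInf]
proof (rule antisym)
  obtain a where a: "a \<in> A" "X = \<Lambda> a (\<gamma> X)" using ex_decomposition by blast
  show "(INF Y\<in>\<gamma> -` D. bregman (\<psi> \<circ> \<gamma>) Y X) \<le> (INF y\<in>D. bregman \<psi> y (\<gamma> X))"
  proof (rule INF_greatest)
    fix y assume "y \<in> D"
    then have "\<Lambda> a y \<in> \<gamma> -` D" using gamma_Lambda[OF a(1)] tau_in_invariant_set[OF D] by simp
    then show "(INF Y\<in>\<gamma> -` D. bregman (\<psi> \<circ> \<gamma>) Y X) \<le> bregman \<psi> y (\<gamma> X)"
      using bregman_comp_Lambda[OF a] by (metis INF_lower)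
  qed
  show "(INF y\<in>D. bregman \<psi> y (\<gamma> X)) \<le> (INF Y\<in>\<gamma> -` D. bregman (\<psi> \<circ> \<gamma>) Y X)"
    by (rule INF_greatest) (use bregman_gamma_le in \<open>auto intro: INF_lower2\<close>)
qed

lemma mem_bproj_comp_imp:
  assumes D: "invariant_set S D" and Z: "Z \<in> bproj (\<gamma> -` D) (\<psi> \<circ> \<gamma>) X"
  shows "\<gamma> Z \<in> bproj D \<psi> (\<gamma> X)" and "\<exists>a\<in>A. X = \<Lambda> a (\<gamma> X) \<and> Z = \<Lambda> a (\<gamma> Z)"
proof -
  have Z': "\<gamma> Z \<in> D" "bregman (\<psi> \<circ> \<gamma>) Z X = bdist D \<psi> (\<gamma> X)" "bdist D \<psi> (\<gamma> X) < \<infinity>"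
    using Z unfolding mem_bproj_iff[of "\<psi> \<circ> \<gamma>", OF psi_comp_not_MInf] bdist_comp[OF D] by auto
  have "bdist D \<psi> (\<gamma> X) \<le> bregman \<psi> (\<gamma> Z) (\<gamma> X)"
    unfolding bdist_eq_INF[OF psi_not_MInf] using Z'(1) by (rule INF_lower)
  then have eq: "bregman (\<psi> \<circ> \<gamma>) Z X = bregman \<psi> (\<gamma> Z) (\<gamma> X)"
    using bregman_gamma_le[of Z X] Z'(2) by simp
  show "\<gamma> Z \<in> bproj D \<psi> (\<gamma> X)"
    unfolding mem_bproj_iff[OF psi_not_MInf] using Z' eq by simp
  show "\<exists>a\<in>A. X = \<Lambda> a (\<gamma> X) \<and> Z = \<Lambda> a (\<gamma> Z)"
    using simultaneous_decomposition_if_bregman_eq[OF eq] Z'(2,3) eq by (metis (no_types))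
qed

lemma Lambda_mem_bproj_comp:
  assumes D: "invariant_set S D" and z: "z \<in> bproj D \<psi> (\<gamma> X)"
    and a: "a \<in> A" "X = \<Lambda> a (\<gamma> X)"
  shows "\<Lambda> a z \<in> bproj (\<gamma> -` D) (\<psi> \<circ> \<gamma>) X"
  using z tau_in_invariant_set[OF D] gamma_Lambda[OF a(1)] bregman_comp_Lambda[OF a]
  unfolding mem_bproj_iff[of "\<psi> \<circ> \<gamma>", OF psi_comp_not_MInf] mem_bproj_iff[OF psi_not_MInf] bdist_comp[OF D]
  by simp

lemma mem_bproj_comp_iff:
  assumes D: "invariant_set S D"
  shows "Z \<in> bproj (\<gamma> -` D) (\<psi> \<circ> \<gamma>) X \<longleftrightarrow>
    \<gamma> Z \<in> bproj D \<psi> (\<gamma> X) \<and> (\<exists>a\<in>A. X = \<Lambda> a (\<gamma> X) \<and> Z = \<Lambda> a (\<gamma> Z))"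
  using mem_bproj_comp_imp[OF D] Lambda_mem_bproj_comp[OF D] by metis

lemma bproj_comp_eq:
  assumes D: "invariant_set S D"
  shows "bproj (\<gamma> -` D) (\<psi> \<circ> \<gamma>) X =
    {\<Lambda> a z | z a. z \<in> bproj D \<psi> (\<gamma> X) \<and> a \<in> adapted_indices \<gamma> A \<Lambda> X}"
proof (intro set_eqI iffI)
  fix Z assume Z: "Z \<in> bproj (\<gamma> -` D) (\<psi> \<circ> \<gamma>) X"
  obtain a where "a \<in> A" "X = \<Lambda> a (\<gamma> X)" "Z = \<Lambda> a (\<gamma> Z)"
    using mem_bproj_comp_imp(2)[OF D Z] by blast
  then show "Z \<in> {\<Lambda> a z | z a. z \<in> bproj D \<psi> (\<gamma> X) \<and> a \<in> adapted_indices \<gamma> A \<Lambda> X}"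
    using mem_bproj_comp_imp(1)[OF D Z] unfolding adapted_indices_def by blast
next
  fix Z assume "Z \<in> {\<Lambda> a z | z a. z \<in> bproj D \<psi> (\<gamma> X) \<and> a \<in> adapted_indices \<gamma> A \<Lambda> X}"
  then obtain z a where "Z = \<Lambda> a z" "z \<in> bproj D \<psi> (\<gamma> X)" "a \<in> A" "X = \<Lambda> a (\<gamma> X)"
    unfolding adapted_indices_def by blast
  then show "Z \<in> bproj (\<gamma> -` D) (\<psi> \<circ> \<gamma>) X" using Lambda_mem_bproj_comp[OF D] by simp
qed

lemma unique_orbit_maximizer_if_bproj_singleton:
  assumes D: "invariant_set S D" and z: "bproj D \<psi> x = {z}"
    and y: "y \<in> orbit S z" and le: "inner z (egrad \<psi> x) \<le> inner y (egrad \<psi> x)"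
  shows "y = z"
proof -
  have "z \<in> bproj D \<psi> x" using z by simp
  then have z': "z \<in> D" "bregman \<psi> z x = bdist D \<psi> x" "bdist D \<psi> x < \<infinity>"
    unfolding mem_bproj_iff[OF psi_not_MInf] by auto
  then have x: "x \<in> interior (edom \<psi>)" by (auto simp: bregman_def split: if_splits)
  have "bregman \<psi> y x \<le> bregman \<psi> z x"
    using le invariant_fun_orbit[OF invariant y] psi_finite[OF x] psi_not_MInf[of z]
    unfolding bregman_interior[OF x]
    by (cases "\<psi> z"; cases "\<psi> x") (auto simp: inner_diff_left)
  moreover have "bdist D \<psi> x \<le> bregman \<psi> y x"
    unfolding bdist_eq_INF[OF psi_not_MInf] using invariant_set_orbit[OF D z'(1) y] by (rule INF_lower)
  ultimately have "y \<in> bproj D \<psi> x"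
    unfolding mem_bproj_iff[OF psi_not_MInf] using invariant_set_orbit[OF D z'(1) y] z' by simp
  then show ?thesis using z by simp
qed

lemma bproj_comp_eq_Lambda_if_singleton:
  assumes D: "invariant_set S D" and z: "bproj D \<psi> (\<gamma> X) = {z}"
    and Z: "Z \<in> bproj (\<gamma> -` D) (\<psi> \<circ> \<gamma>) X" and a: "a \<in> A" "X = \<Lambda> a (\<gamma> X)"
  shows "Z = \<Lambda> a z"
proof -
  have "z \<in> bproj D \<psi> (\<gamma> X)" using z by simp
  then have x: "\<gamma> X \<in> interior (edom \<psi>)"
    unfolding mem_bproj_iff[OF psi_not_MInf] by (auto simp: bregman_def split: if_splits)
  obtain c where c: "c \<in> A" "X = \<Lambda> c (\<gamma> X)" "Z = \<Lambda> c (\<gamma> Z)"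
    using mem_bproj_comp_imp(2)[OF D Z] by blast
  have "\<gamma> Z = z" using mem_bproj_comp_imp(1)[OF D Z] z by simp
  moreover have "\<Lambda> c z = \<Lambda> a z"
  proof (rule Lambda_eq_if_unique_orbit_maximizer[OF c(1) a(1)])
    show "\<Lambda> c (egrad \<psi> (\<gamma> X)) = \<Lambda> a (egrad \<psi> (\<gamma> X))"
      using egrad_comp[OF x a] egrad_comp[OF x c(1,2)] by simp
    show "\<tau> (egrad \<psi> (\<gamma> X)) = egrad \<psi> (\<gamma> X)" by (rule tau_egrad[OF x])
  qed (rule unique_orbit_maximizer_if_bproj_singleton[OF D z])
  ultimately show ?thesis using c(3) by simp
qed

lemma is_singleton_bproj_comp_iff:
  assumes D: "invariant_set S D"
  shows "is_singleton (bproj (\<gamma> -` D) (\<psi> \<circ> \<gamma>) X) \<longleftrightarrow> is_singleton (bproj D \<psi> (\<gamma> X))"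
proof -
  obtain a where a: "a \<in> A" "X = \<Lambda> a (\<gamma> X)" using ex_decomposition by blast
  show ?thesis
  proof
    assume "is_singleton (bproj (\<gamma> -` D) (\<psi> \<circ> \<gamma>) X)"
    then obtain Z where Z: "bproj (\<gamma> -` D) (\<psi> \<circ> \<gamma>) X = {Z}" by (rule is_singletonE)
    show "is_singleton (bproj D \<psi> (\<gamma> X))"
    proof (rule is_singletonI')
      show "bproj D \<psi> (\<gamma> X) \<noteq> {}" using mem_bproj_comp_imp(1)[OF D, of Z X] Z by auto
      fix z z' assume zz: "z \<in> bproj D \<psi> (\<gamma> X)" "z' \<in> bproj D \<psi> (\<gamma> X)"
      have "\<Lambda> a z \<in> {Z}" "\<Lambda> a z' \<in> {Z}"
        using Lambda_mem_bproj_comp[OF D zz(1) a] Lambda_mem_bproj_comp[OF D zz(2) a] Z by simp_all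
      then have "\<Lambda> a z = \<Lambda> a z'" by simp
      then show "z = z'" by (rule Lambda_inj[OF a(1)])
    qed
  next
    assume "is_singleton (bproj D \<psi> (\<gamma> X))"
    then obtain z where z: "bproj D \<psi> (\<gamma> X) = {z}" by (rule is_singletonE)
    show "is_singleton (bproj (\<gamma> -` D) (\<psi> \<circ> \<gamma>) X)"
    proof (rule is_singletonI')
      show "bproj (\<gamma> -` D) (\<psi> \<circ> \<gamma>) X \<noteq> {}"
        using Lambda_mem_bproj_comp[OF D _ a] z by blast
      show "Z = Z'" if "Z \<in> bproj (\<gamma> -` D) (\<psi> \<circ> \<gamma>) X" "Z' \<in> bproj (\<gamma> -` D) (\<psi> \<circ> \<gamma>) X"
        for Z Z'
        using bproj_comp_eq_Lambda_if_singleton[OF D z that(1) a]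
          bproj_comp_eq_Lambda_if_singleton[OF D z that(2) a] by simp
    qed
  qed
qed

end

theorem corollary6p4:
  fixes S :: "('x::euclidean_space \<Rightarrow> 'x) set"
    and \<gamma> :: "'h::euclidean_space \<Rightarrow> 'x"
    and A :: "'a set"
    and \<Lambda> :: "'a \<Rightarrow> 'x \<Rightarrow> 'h"
    and D :: "'x set"
    and \<psi> :: "'x \<Rightarrow> ereal"
    and X :: 'h
  assumes sds: "spectral_decomposition_system S \<gamma> A \<Lambda>"
    and D_ne: "D \<noteq> {}"
    and D_inv: "invariant_set S D"
    and psi_G0: "Gamma0 \<psi>"
    and psi_inv: "invariant_fun S \<psi>"
    and psi_leg: "legendre \<psi>"
    and D_dom: "D \<inter> edom \<psi> \<noteq> {}"
  shows "bdist (\<gamma> -` D) (\<psi> \<circ> \<gamma>) X = bdist D \<psi> (\<gamma> X)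
    \<and> (\<forall>Z. Z \<in> bproj (\<gamma> -` D) (\<psi> \<circ> \<gamma>) X \<longleftrightarrow>
           (\<gamma> Z \<in> bproj D \<psi> (\<gamma> X) \<and> (\<exists>a\<in>A. X = \<Lambda> a (\<gamma> X) \<and> Z = \<Lambda> a (\<gamma> Z))))
    \<and> (bproj (\<gamma> -` D) (\<psi> \<circ> \<gamma>) X =
           {\<Lambda> a z | z a. z \<in> bproj D \<psi> (\<gamma> X) \<and> a \<in> adapted_indices \<gamma> A \<Lambda> X})
    \<and> (is_singleton (bproj (\<gamma> -` D) (\<psi> \<circ> \<gamma>) X) \<longleftrightarrow> is_singleton (bproj D \<psi> (\<gamma> X)))"
proof -
  interpret spectral_function S \<gamma> A \<Lambda> \<psi>
    by unfold_locales (fact sds psi_leg psi_inv)+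
  show ?thesis
  proof (intro conjI allI)
    show "bdist (\<gamma> -` D) (\<psi> \<circ> \<gamma>) X = bdist D \<psi> (\<gamma> X)" by (rule bdist_comp[OF D_inv])
    show "Z \<in> bproj (\<gamma> -` D) (\<psi> \<circ> \<gamma>) X \<longleftrightarrow>
        \<gamma> Z \<in> bproj D \<psi> (\<gamma> X) \<and> (\<exists>a\<in>A. X = \<Lambda> a (\<gamma> X) \<and> Z = \<Lambda> a (\<gamma> Z))" for Z
      by (rule mem_bproj_comp_iff[OF D_inv])
  qed (rule bproj_comp_eq[OF D_inv] is_singleton_bproj_comp_iff[OF D_inv])+
qed

end
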